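(* Let $F$ be a field of characteristic $\neq 2$, let $O$ be a Cayley algebra over $F$, $V=\operatorname{im}(O)$ and $$\mathcal{B}=\{\operatorname{im}(H)\colon H\text{ is a 4-dimensional subalgebra of } O\}.$$ Then $(V,\mathcal{B})$ is a $(7,3,2)$ $q$-covering design (every 2-dimensional subspace of $V$ lies in at least one element of $\mathcal{B}$, and each element of $\mathcal{B}$ is 3-dimensional), it is inclusion-minimal (no proper subcollection of $\mathcal{B}$ covers all 2-dimensional subspaces of $V$), and it is a $2$-$(7,3,1)$ subspace design (every 2-dimensional subspace lies in exactly one element of $\mathcal{B}$) if and only if $O$ is a division algebra.
   Context: All algebras are finite-dimensional unital, not necessarily associative $F$-algebras; subalgebras contain $1$. An involution is a linear map $*$ with $(ab)^*=b^*a^*$, $(a^* )^*=a$. Cayley–Dickson algebras: $F$ (identity involution) is one; if $A$ is one with involution $*$ and $\gamma\in F^\times$, then $D_\gamma(A)=A\oplus A$ with elements written $a+ib$, multiplication $(a+ib)(c+id)=(ac+\gamma db^* )+i(a^*d+cb)$ and involution $(a+ib)^*=a^*-ib$ is one. A Cayley algebra is $D_\gamma(D_\beta(D_\alpha(F)))$ with $\alpha,\beta,\gamma\in F^\times$. $\operatorname{im}(H)=\{a\in H:a^*=-a\}$. A division algebra is one without zero divisors. A $(v,k,t)$ $q$-covering design on a $v$-dimensional space $V$ is a set of $k$-dimensional subspaces of $V$ such that every $t$-dimensional subspace of $V$ is contained in at least one of them. *)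

theory Defs
  imports Complex_Main "HOL-Library.Product_Plus"
begin

text \<open>Elements a + i b of D_gamma(A) are represented as pairs (a, b).
  sc is the scalar multiplication of F on A, m the multiplication of A, s its involution.\<close>

definition cd_mult ::
  "('a \<Rightarrow> 'b::ab_group_add \<Rightarrow> 'b) \<Rightarrow> ('b \<Rightarrow> 'b \<Rightarrow> 'b) \<Rightarrow> ('b \<Rightarrow> 'b) \<Rightarrow> 'a
     \<Rightarrow> 'b \<times> 'b \<Rightarrow> 'b \<times> 'b \<Rightarrow> 'b \<times> 'b" where
  "cd_mult sc m s g x y =
     (case x of (a, b) \<Rightarrow> case y of (c, d) \<Rightarrow>
        (m a c + sc g (m d (s b)), m (s a) d + m c b))"

definition cd_conj :: "('b \<Rightarrow> 'b) \<Rightarrow> 'b \<times> 'b \<Rightarrow> 'b::ab_group_add \<times> 'b" where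
  "cd_conj s x = (s (fst x), - snd x)"

definition pair_scale :: "('a \<Rightarrow> 'b \<Rightarrow> 'b) \<Rightarrow> 'a \<Rightarrow> 'b \<times> 'b \<Rightarrow> 'b \<times> 'b" where
  "pair_scale sc r x = (sc r (fst x), sc r (snd x))"

text \<open>Level 1: D_alpha(F), level 2: D_beta(D_alpha(F)), level 3: the Cayley algebra
  D_gamma(D_beta(D_alpha(F))).  Base level F has multiplication (*) and identity involution.\<close>

definition scale1 :: "'a::field \<Rightarrow> 'a \<times> 'a \<Rightarrow> 'a \<times> 'a" where
  "scale1 = pair_scale (*)"
definition mult1 :: "'a::field \<Rightarrow> 'a \<times> 'a \<Rightarrow> 'a \<times> 'a \<Rightarrow> 'a \<times> 'a" where
  "mult1 \<alpha> = cd_mult (*) (*) id \<alpha>"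
definition conj1 :: "'a::field \<times> 'a \<Rightarrow> 'a \<times> 'a" where
  "conj1 = cd_conj id"

type_synonym 'a quat = "('a \<times> 'a) \<times> ('a \<times> 'a)"
type_synonym 'a oct = "'a quat \<times> 'a quat"

definition scale2 :: "'a::field \<Rightarrow> 'a quat \<Rightarrow> 'a quat" where
  "scale2 = pair_scale scale1"
definition mult2 :: "'a::field \<Rightarrow> 'a \<Rightarrow> 'a quat \<Rightarrow> 'a quat \<Rightarrow> 'a quat" where
  "mult2 \<alpha> \<beta> = cd_mult scale1 (mult1 \<alpha>) conj1 \<beta>"
definition conj2 :: "'a::field quat \<Rightarrow> 'a quat" where
  "conj2 = cd_conj conj1"

definition oct_scale :: "'a::field \<Rightarrow> 'a oct \<Rightarrow> 'a oct" where
  "oct_scale = pair_scale scale2"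
definition oct_mult :: "'a::field \<Rightarrow> 'a \<Rightarrow> 'a \<Rightarrow> 'a oct \<Rightarrow> 'a oct \<Rightarrow> 'a oct" where
  "oct_mult \<alpha> \<beta> \<gamma> = cd_mult scale2 (mult2 \<alpha> \<beta>) conj2 \<gamma>"
definition oct_conj :: "'a::field oct \<Rightarrow> 'a oct" where
  "oct_conj = cd_conj conj2"
definition oct_one :: "'a::field oct" where
  "oct_one = (((1, 0), (0, 0)), ((0, 0), (0, 0)))"

definition oct_subalgebra :: "'a::field \<Rightarrow> 'a \<Rightarrow> 'a \<Rightarrow> 'a oct set \<Rightarrow> bool" where
  "oct_subalgebra \<alpha> \<beta> \<gamma> H \<longleftrightarrow>
     module.subspace oct_scale H \<and> oct_one \<in> H \<and>
     (\<forall>x\<in>H. \<forall>y\<in>H. oct_mult \<alpha> \<beta> \<gamma> x y \<in> H)"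

definition im_of :: "'a::field oct set \<Rightarrow> 'a oct set" where
  "im_of H = {a \<in> H. oct_conj a = - a}"

definition oct_division :: "'a::field \<Rightarrow> 'a \<Rightarrow> 'a \<Rightarrow> bool" where
  "oct_division \<alpha> \<beta> \<gamma> \<longleftrightarrow> (\<forall>x y. oct_mult \<alpha> \<beta> \<gamma> x y = 0 \<longrightarrow> x = 0 \<or> y = 0)"

definition q_covers :: "('a::field \<Rightarrow> 'b::ab_group_add \<Rightarrow> 'b) \<Rightarrow> 'b set \<Rightarrow> nat \<Rightarrow> 'b set set \<Rightarrow> bool" where
  "q_covers sc V t B \<longleftrightarrow>
     (\<forall>W. module.subspace sc W \<and> W \<subseteq> V \<and> vector_space.dim sc W = t \<longrightarrow> (\<exists>U\<in>B. W \<subseteq> U))"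

definition q_covering_design ::
  "('a::field \<Rightarrow> 'b::ab_group_add \<Rightarrow> 'b) \<Rightarrow> 'b set \<Rightarrow> nat \<Rightarrow> nat \<Rightarrow> nat \<Rightarrow> 'b set set \<Rightarrow> bool" where
  "q_covering_design sc V v k t B \<longleftrightarrow>
     module.subspace sc V \<and> vector_space.dim sc V = v \<and>
     (\<forall>U\<in>B. module.subspace sc U \<and> U \<subseteq> V \<and> vector_space.dim sc U = k) \<and>
     q_covers sc V t B"

definition q_covering_minimal :: "('a::field \<Rightarrow> 'b::ab_group_add \<Rightarrow> 'b) \<Rightarrow> 'b set \<Rightarrow> nat \<Rightarrow> 'b set set \<Rightarrow> bool" where
  "q_covering_minimal sc V t B \<longleftrightarrow> (\<forall>B'. B' \<subset> B \<longrightarrow> \<not> q_covers sc V t B')"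

definition q_subspace_design ::
  "('a::field \<Rightarrow> 'b::ab_group_add \<Rightarrow> 'b) \<Rightarrow> 'b set \<Rightarrow> nat \<Rightarrow> nat \<Rightarrow> nat \<Rightarrow> nat \<Rightarrow> 'b set set \<Rightarrow> bool" where
  "q_subspace_design sc V t v k lam B \<longleftrightarrow>
     module.subspace sc V \<and> vector_space.dim sc V = v \<and>
     (\<forall>U\<in>B. module.subspace sc U \<and> U \<subseteq> V \<and> vector_space.dim sc U = k) \<and>
     (\<forall>W. module.subspace sc W \<and> W \<subseteq> V \<and> vector_space.dim sc W = t \<longrightarrow>
        finite {U\<in>B. W \<subseteq> U} \<and> card {U\<in>B. W \<subseteq> U} = lam)"

end

theory Submission
  imports Defs
begin

text \<open>Write \<open>O = F\<cdot>1 \<oplus> V\<close> with \<open>V = im O\<close>. For \<open>x, y \<in> V\<close> the product is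
  \<open>x y = - n(x, y)\<cdot>1 + x \<times> y\<close>, where \<open>n\<close> is the polar form of the norm and \<open>\<times>\<close> is an
  alternating bilinear product on \<open>V\<close> with \<open>x \<times> (x \<times> y) = n(x, y) x - n(x, x) y\<close>.
  Hence the imaginary parts of the 4-dimensional subalgebras are exactly the 3-dimensional
  subspaces of \<open>V\<close> closed under \<open>\<times>\<close> (the blocks). If \<open>x, y\<close> span a plane \<open>W\<close> with
  \<open>x \<times> y \<notin> W\<close>, then \<open>span {x, y, x \<times> y}\<close> is the unique block through \<open>W\<close>; otherwise \<open>W\<close>
  contains a nonzero isotropic vector and a block through \<open>W\<close> is built from eigenvectors of
  \<open>u \<times> -\<close>. Every block contains a plane of the first kind, which gives minimality. Finally
  \<open>O\<close> is a division algebra iff \<open>n\<close> is anisotropic on \<open>V\<close>: then every plane is of the first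
  kind, whereas a nonzero isotropic vector lies in a plane contained in two distinct blocks.\<close>

section \<open>Independent pairs in a vector space\<close>

lemma double_cancel:
  fixes a b :: "'a::field"
  assumes "(2::'a) \<noteq> 0" and "a + a = b + b"
  shows "a = b"
proof -
  have "2 * a = 2 * b" using assms(2) by (simp only: mult_2)
  with assms(1) show ?thesis by simp
qed

lemma neg_eq_self_imp_zero:
  fixes a :: "'a::field"
  assumes "(2::'a) \<noteq> 0" and "- a = a"
  shows "a = 0"
  using double_cancel[OF assms(1), of a 0] assms(2) by (simp add: neg_eq_iff_add_eq_0)

definition indep2 :: "('a::field \<Rightarrow> 'b::ab_group_add \<Rightarrow> 'b) \<Rightarrow> 'b \<Rightarrow> 'b \<Rightarrow> bool" where
  "indep2 scale x y \<longleftrightarrow> (\<forall>a b. scale a x + scale b y = 0 \<longrightarrow> a = 0 \<and> b = 0)"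

context vector_space
begin

lemma double_scale: "x + x = scale 2 x"
  using scale_left_distrib[of 1 1 x] by (simp add: one_add_one)

lemma vector_double_cancel:
  fixes x y :: 'b
  assumes "(2::'a) \<noteq> 0" and "x + x = y + y"
  shows "x = y"
  using assms by (simp add: double_scale)

lemma vector_neg_eq_self_imp_zero:
  fixes x :: 'b
  assumes "(2::'a) \<noteq> 0" and "- x = x"
  shows "x = 0"
  using vector_double_cancel[OF assms(1), of x 0] assms(2) by (simp add: neg_eq_iff_add_eq_0)

lemma indep2_coeffs_eq:
  assumes "indep2 scale x y" and "scale a x + scale b y = scale a' x + scale b' y"
  shows "a = a' \<and> b = b'"
proof -
  have "scale (a - a') x + scale (b - b') y = 0"
    using assms(2) by (simp add: algebra_simps)
  then have "a - a' = 0 \<and> b - b' = 0" using assms(1) unfolding indep2_def by blast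
  then show ?thesis by simp
qed

lemma indep2_nonzero:
  assumes "indep2 scale x y" shows "x \<noteq> 0" "y \<noteq> 0"
  using assms[unfolded indep2_def, rule_format, of 1 0] assms[unfolded indep2_def, rule_format, of 0 1]
  by auto

lemma indep2_sym:
  assumes "indep2 scale x y" shows "indep2 scale y x"
  unfolding indep2_def
proof (intro allI impI)
  fix a b assume "scale a y + scale b x = 0"
  then have "scale b x + scale a y = 0" by (simp add: add.commute)
  then show "a = 0 \<and> b = 0" using assms unfolding indep2_def by blast
qed

lemma indep2_distinct:
  assumes "indep2 scale x y" shows "x \<noteq> y"
proof
  assume "x = y"
  then show False using assms[unfolded indep2_def, rule_format, of 1 "- 1"] by simp
qed

lemma in_span_singleton: "w \<in> span {x} \<longleftrightarrow> (\<exists>a. w = scale a x)"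
  by (auto simp: span_singleton)

lemma in_span_pair: "w \<in> span {x, y} \<longleftrightarrow> (\<exists>a b. w = scale a x + scale b y)"
proof
  assume "w \<in> span {x, y}"
  then obtain a b where "w - scale a x = scale b y"
    unfolding span_breakdown_eq[of w x "{y}"] in_span_singleton by blast
  then have "w = scale a x + scale b y" by (simp add: diff_eq_eq add.commute)
  then show "\<exists>a b. w = scale a x + scale b y" by blast
next
  assume "\<exists>a b. w = scale a x + scale b y"
  then obtain a b where "w = scale a x + scale b y" by blast
  then have "w - scale a x = scale b y" by simp
  then show "w \<in> span {x, y}"
    unfolding span_breakdown_eq[of w x "{y}"] in_span_singleton by blast
qed

lemma in_span_triple:
  "w \<in> span {x, y, z} \<longleftrightarrow> (\<exists>a b c. w = scale a x + scale b y + scale c z)"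
proof
  assume "w \<in> span {x, y, z}"
  then obtain a b c where "w - scale a x = scale b y + scale c z"
    unfolding span_breakdown_eq[of w x "{y, z}"] in_span_pair by blast
  then have "w = scale a x + scale b y + scale c z" by (simp add: diff_eq_eq algebra_simps)
  then show "\<exists>a b c. w = scale a x + scale b y + scale c z" by blast
next
  assume "\<exists>a b c. w = scale a x + scale b y + scale c z"
  then obtain a b c where "w - scale a x = scale b y + scale c z" by (auto simp: algebra_simps)
  then show "w \<in> span {x, y, z}"
    unfolding span_breakdown_eq[of w x "{y, z}"] in_span_pair by blast
qed

lemma indep2_not_in_span:
  assumes "indep2 scale x y" shows "x \<notin> span {y}"
proof
  assume "x \<in> span {y}"
  then obtain k where "x = scale k y" by (auto simp: in_span_singleton)
  then show False using assms[unfolded indep2_def, rule_format, of 1 "- k"] by simp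
qed

lemma indep2_independent: "indep2 scale x y \<Longrightarrow> independent {x, y}"
  using indep2_nonzero indep2_distinct indep2_not_in_span by (auto simp: independent_insert)

lemma independent_indep2:
  assumes "independent {x, y}" and "x \<noteq> y"
  shows "indep2 scale x y"
  unfolding indep2_def
proof (intro allI impI)
  fix a b assume h: "scale a x + scale b y = 0"
  have nx: "x \<notin> span {y}" and ny: "y \<noteq> 0"
    using assms by (auto simp: independent_insert)
  have "a = 0"
  proof (rule ccontr)
    assume a: "a \<noteq> 0"
    have "scale a x = scale (- b) y" using h by (simp add: eq_neg_iff_add_eq_0)
    then have "scale (inverse a) (scale a x) = scale (inverse a) (scale (- b) y)" by simp
    then have "x = scale (- b / a) y" using a by (simp add: divide_inverse mult.commute)
    with nx show False unfolding in_span_singleton by blast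
  qed
  with h ny show "a = 0 \<and> b = 0" by simp
qed

lemma indep2_add_scaled:
  assumes "indep2 scale x y" and "a \<noteq> 0"
  shows "indep2 scale (scale a x + scale b y) y"
  unfolding indep2_def
proof (intro allI impI)
  fix c d assume "scale c (scale a x + scale b y) + scale d y = 0"
  then have "scale (c * a) x + scale (c * b + d) y = 0" by (simp add: algebra_simps)
  then have "c * a = 0 \<and> c * b + d = 0" using assms(1) unfolding indep2_def by blast
  then show "c = 0 \<and> d = 0" using assms(2) by auto
qed

lemma not_indep2_collinear:
  assumes "\<not> indep2 scale x y"
  shows "x = 0 \<or> (\<exists>k. y = scale k x)"
proof -
  obtain a b where ab: "scale a x + scale b y = 0" "a \<noteq> 0 \<or> b \<noteq> 0"
    using assms unfolding indep2_def by blast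
  show ?thesis
  proof (cases "b = 0")
    case True
    then show ?thesis using ab by simp
  next
    case False
    have "scale b y = scale (- a) x" using ab(1) by (simp add: add_eq_0_iff2 add.commute)
    then have "scale (inverse b) (scale b y) = scale (inverse b) (scale (- a) x)" by simp
    then have "y = scale (- a / b) x" using False by (simp add: divide_inverse mult.commute)
    then show ?thesis by blast
  qed
qed

lemma not_in_span_indep2:
  assumes "x \<noteq> 0" and "y \<notin> span {x}"
  shows "indep2 scale x y"
  unfolding indep2_def
proof (intro allI impI)
  fix a b assume h: "scale a x + scale b y = 0"
  have "b = 0"
  proof (rule ccontr)
    assume b: "b \<noteq> 0"
    have "scale b y = scale (- a) x" using h by (simp add: add_eq_0_iff2 add.commute)
    then have "scale (inverse b) (scale b y) = scale (inverse b) (scale (- a) x)" by simp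
    then have "y = scale (- a / b) x" using b by (simp add: divide_inverse mult.commute)
    with assms(2) show False unfolding in_span_singleton by blast
  qed
  with h assms(1) show "a = 0 \<and> b = 0" by simp
qed

lemma indep3_coeffs_zero:
  assumes "indep2 scale x y" and "z \<notin> span {x, y}" and "scale a x + scale b y + scale c z = 0"
  shows "a = 0 \<and> b = 0 \<and> c = 0"
proof -
  have "c = 0"
  proof (rule ccontr)
    assume c: "c \<noteq> 0"
    have "scale c z = - (scale a x + scale b y)"
      using assms(3) by (simp only: add_eq_0_iff)
    then have "scale (inverse c) (scale c z) = scale (inverse c) (- (scale a x + scale b y))"
      by simp
    then have "z = scale (- a / c) x + scale (- b / c) y"
      using c by (simp add: scale_right_diff_distrib divide_inverse mult.commute)
    with assms(2) show False unfolding in_span_pair by blast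
  qed
  with assms(1,3) show ?thesis unfolding indep2_def by simp
qed

lemma dim_span_pair:
  assumes "indep2 scale x y" shows "dim (span {x, y}) = 2"
proof -
  have "dim (span {x, y}) = card {x, y}"
    by (rule dim_span_eq_card_independent[OF indep2_independent[OF assms]])
  then show ?thesis using indep2_distinct[OF assms] by simp
qed

lemma dim2_subspace_basis:
  assumes "subspace W" and "dim W = 2"
  obtains x y where "x \<in> W" "y \<in> W" "indep2 scale x y" "W = span {x, y}"
proof -
  obtain B where B: "B \<subseteq> W" "independent B" "W \<subseteq> span B" "card B = dim W"
    using basis_exists by blast
  from B(4) assms(2) have "card B = 2" by simp
  then obtain x y where xy: "B = {x, y}" "x \<noteq> y" unfolding card_2_iff by blast
  have "span B \<subseteq> W" using B(1) assms(1) span_minimal by blast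
  then have "W = span {x, y}" using B(3) xy(1) by auto
  moreover have "x \<in> W" "y \<in> W" using B(1) xy(1) by auto
  moreover have "indep2 scale x y" using independent_indep2[of x y] B(2) xy by simp
  ultimately show ?thesis using that by blast
qed

end

context finite_dimensional_vector_space
begin

lemma dim_span_triple:
  assumes "indep2 scale x y" and "z \<notin> span {x, y}"
  shows "dim (span {x, y, z}) = 3"
proof -
  have "dim (span {x, y, z}) = dim (insert z {x, y})" by (simp only: dim_span insert_commute)
  also have "\<dots> = dim {x, y} + 1" by (subst dim_insert) (simp only: assms(2) if_False)
  also have "dim {x, y} = 2" using dim_span_pair[OF assms(1)] by (simp only: dim_span)
  finally show ?thesis by simp
qed

lemma dim2_subspace_eq_span:
  assumes "subspace W" "dim W = 2" "x \<in> W" "y \<in> W" "indep2 scale x y"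
  shows "W = span {x, y}"
  using subspace_dim_equal[of "span {x, y}" W] span_minimal[of "{x, y}" W] assms dim_span_pair
  by auto

lemma dim3_subspace_eq_span:
  assumes "subspace U" "dim U = 3" "x \<in> U" "y \<in> U" "z \<in> U" "indep2 scale x y" "z \<notin> span {x, y}"
  shows "U = span {x, y, z}"
  using subspace_dim_equal[of "span {x, y, z}" U] span_minimal[of "{x, y, z}" U] assms dim_span_triple
  by auto

lemma dim3_subspace_basis:
  assumes "subspace U" and "dim U = 3"
  obtains x y z where "x \<in> U" "y \<in> U" "z \<in> U" "indep2 scale x y" "z \<notin> span {x, y}"
proof -
  obtain B where B: "B \<subseteq> U" "independent B" "U \<subseteq> span B" "card B = dim U"
    using basis_exists by blast
  from B(4) assms(2) have "card B = 3" by simp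
  then obtain x y z where xyz: "B = {x, y, z}" "x \<noteq> y" "y \<noteq> z" "x \<noteq> z"
    unfolding card_3_iff by blast
  have "insert z {x, y} = B" using xyz(1) by auto
  then have ins: "independent (insert z {x, y})" using B(2) by simp
  have "z \<notin> {x, y}" using xyz(3,4) by auto
  then have "independent (insert z {x, y}) = (independent {x, y} \<and> z \<notin> span {x, y})"
    using independent_insert[of z "{x, y}"] by (simp only: if_False)
  then have "independent {x, y} \<and> z \<notin> span {x, y}" using ins by blast
  then have "indep2 scale x y" "z \<notin> span {x, y}"
    using independent_indep2 xyz(2) by auto
  moreover have "x \<in> U" "y \<in> U" "z \<in> U" using B(1) xyz(1) by auto
  ultimately show ?thesis using that by blast
qed

lemma dim_ge2_indep2:
  assumes "subspace R" "dim R \<ge> 2"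
  obtains a b where "a \<in> R" "b \<in> R" "indep2 scale a b"
proof -
  obtain T where T: "subspace T" "T \<subseteq> span R" "dim T = 2"
    using choose_subspace_of_subspace[OF assms(2)] by blast
  obtain a b where "a \<in> T" "b \<in> T" "indep2 scale a b" using dim2_subspace_basis[OF T(1,3)] by blast
  moreover have "span R = R" using assms(1) by (simp add: span_eq_iff)
  ultimately show ?thesis using T(2) that by blast
qed

end

definition coord0 :: "'a oct \<Rightarrow> 'a" where "coord0 x = fst (fst (fst x))"
definition coord1 :: "'a oct \<Rightarrow> 'a" where "coord1 x = snd (fst (fst x))"
definition coord2 :: "'a oct \<Rightarrow> 'a" where "coord2 x = fst (snd (fst x))"
definition coord3 :: "'a oct \<Rightarrow> 'a" where "coord3 x = snd (snd (fst x))"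
definition coord4 :: "'a oct \<Rightarrow> 'a" where "coord4 x = fst (fst (snd x))"
definition coord5 :: "'a oct \<Rightarrow> 'a" where "coord5 x = snd (fst (snd x))"
definition coord6 :: "'a oct \<Rightarrow> 'a" where "coord6 x = fst (snd (snd x))"
definition coord7 :: "'a oct \<Rightarrow> 'a" where "coord7 x = snd (snd (snd x))"

definition oct_of :: "'a \<Rightarrow> 'a \<Rightarrow> 'a \<Rightarrow> 'a \<Rightarrow> 'a \<Rightarrow> 'a \<Rightarrow> 'a \<Rightarrow> 'a \<Rightarrow> 'a oct" where
  "oct_of a0 a1 a2 a3 a4 a5 a6 a7 = (((a0,a1),(a2,a3)),((a4,a5),(a6,a7)))"

lemmas coord_defs = coord0_def coord1_def coord2_def coord3_def coord4_def coord5_def coord6_def coord7_def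

lemma coord_oct_of[simp]:
  "coord0 (oct_of a0 a1 a2 a3 a4 a5 a6 a7) = a0" "coord1 (oct_of a0 a1 a2 a3 a4 a5 a6 a7) = a1"
  "coord2 (oct_of a0 a1 a2 a3 a4 a5 a6 a7) = a2" "coord3 (oct_of a0 a1 a2 a3 a4 a5 a6 a7) = a3"
  "coord4 (oct_of a0 a1 a2 a3 a4 a5 a6 a7) = a4" "coord5 (oct_of a0 a1 a2 a3 a4 a5 a6 a7) = a5"
  "coord6 (oct_of a0 a1 a2 a3 a4 a5 a6 a7) = a6" "coord7 (oct_of a0 a1 a2 a3 a4 a5 a6 a7) = a7"
  by (simp_all add: coord_defs oct_of_def)

lemma oct_eq_iff: "x = y \<longleftrightarrow> coord0 x = coord0 y \<and> coord1 x = coord1 y \<and> coord2 x = coord2 y \<and> coord3 x = coord3 y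
   \<and> coord4 x = coord4 y \<and> coord5 x = coord5 y \<and> coord6 x = coord6 y \<and> coord7 x = coord7 y"
  by (auto simp: coord_defs prod_eq_iff)

lemma coord_add[simp]:
  "coord0 (x+y) = coord0 x + coord0 y" "coord1 (x+y) = coord1 x + coord1 y" "coord2 (x+y) = coord2 x + coord2 y" "coord3 (x+y) = coord3 x + coord3 y"
  "coord4 (x+y) = coord4 x + coord4 y" "coord5 (x+y) = coord5 x + coord5 y" "coord6 (x+y) = coord6 x + coord6 y" "coord7 (x+y) = coord7 x + coord7 y"
  by (simp_all add: coord_defs)

lemma coord_diff[simp]:
  "coord0 (x-y) = coord0 x - coord0 y" "coord1 (x-y) = coord1 x - coord1 y" "coord2 (x-y) = coord2 x - coord2 y" "coord3 (x-y) = coord3 x - coord3 y"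
  "coord4 (x-y) = coord4 x - coord4 y" "coord5 (x-y) = coord5 x - coord5 y" "coord6 (x-y) = coord6 x - coord6 y" "coord7 (x-y) = coord7 x - coord7 y"
  by (simp_all add: coord_defs)

lemma coord_uminus[simp]:
  "coord0 (-x) = - coord0 x" "coord1 (-x) = - coord1 x" "coord2 (-x) = - coord2 x" "coord3 (-x) = - coord3 x"
  "coord4 (-x) = - coord4 x" "coord5 (-x) = - coord5 x" "coord6 (-x) = - coord6 x" "coord7 (-x) = - coord7 x"
  by (simp_all add: coord_defs)

lemma coord_zero[simp]:
  "coord0 0 = 0" "coord1 0 = 0" "coord2 0 = 0" "coord3 0 = 0" "coord4 0 = 0" "coord5 0 = 0" "coord6 0 = 0" "coord7 0 = 0"
  by (simp_all add: coord_defs)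

lemma coord_scale[simp]:
  fixes x :: "'a::field oct"
  shows
  "coord0 (oct_scale c x) = c * coord0 x" "coord1 (oct_scale c x) = c * coord1 x" "coord2 (oct_scale c x) = c * coord2 x"
  "coord3 (oct_scale c x) = c * coord3 x" "coord4 (oct_scale c x) = c * coord4 x" "coord5 (oct_scale c x) = c * coord5 x"
  "coord6 (oct_scale c x) = c * coord6 x" "coord7 (oct_scale c x) = c * coord7 x"
  by (simp_all add: coord_defs oct_scale_def scale2_def scale1_def pair_scale_def)

lemma coord_one[simp]:
  "coord0 (oct_one::'a::field oct) = 1" "coord1 (oct_one::'a::field oct) = 0" "coord2 (oct_one::'a::field oct) = 0"
  "coord3 (oct_one::'a::field oct) = 0" "coord4 (oct_one::'a::field oct) = 0" "coord5 (oct_one::'a::field oct) = 0"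
  "coord6 (oct_one::'a::field oct) = 0" "coord7 (oct_one::'a::field oct) = 0"
  by (simp_all add: coord_defs oct_one_def)

lemma coord_conj[simp]:
  fixes x :: "'a::field oct"
  shows
  "coord0 (oct_conj x) = coord0 x" "coord1 (oct_conj x) = - coord1 x" "coord2 (oct_conj x) = - coord2 x"
  "coord3 (oct_conj x) = - coord3 x" "coord4 (oct_conj x) = - coord4 x" "coord5 (oct_conj x) = - coord5 x"
  "coord6 (oct_conj x) = - coord6 x" "coord7 (oct_conj x) = - coord7 x"
  by (simp_all add: coord_defs oct_conj_def conj2_def conj1_def cd_conj_def)

lemma oct_of_eq_iff: "oct_of a0 a1 a2 a3 a4 a5 a6 a7 = oct_of b0 b1 b2 b3 b4 b5 b6 b7 \<longleftrightarrow>
  a0 = b0 \<and> a1 = b1 \<and> a2 = b2 \<and> a3 = b3 \<and> a4 = b4 \<and> a5 = b5 \<and> a6 = b6 \<and> a7 = b7"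
  by (simp add: oct_of_def)

lemma vector_space_oct_scale: "vector_space (oct_scale :: 'a::field \<Rightarrow> 'a oct \<Rightarrow> 'a oct)"
  by unfold_locales (simp_all add: oct_eq_iff algebra_simps)

interpretation Oct: vector_space "oct_scale :: 'a::field \<Rightarrow> 'a oct \<Rightarrow> 'a oct"
  by (rule vector_space_oct_scale)

lemmas oct_span_intros = Oct.span_base Oct.span_add Oct.span_diff Oct.span_scale Oct.span_neg Oct.span_zero

definition E0 :: "'a::field oct" where "E0 = oct_of 1 0 0 0 0 0 0 0"
definition E1 :: "'a::field oct" where "E1 = oct_of 0 1 0 0 0 0 0 0"
definition E2 :: "'a::field oct" where "E2 = oct_of 0 0 1 0 0 0 0 0"
definition E3 :: "'a::field oct" where "E3 = oct_of 0 0 0 1 0 0 0 0"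
definition E4 :: "'a::field oct" where "E4 = oct_of 0 0 0 0 1 0 0 0"
definition E5 :: "'a::field oct" where "E5 = oct_of 0 0 0 0 0 1 0 0"
definition E6 :: "'a::field oct" where "E6 = oct_of 0 0 0 0 0 0 1 0"
definition E7 :: "'a::field oct" where "E7 = oct_of 0 0 0 0 0 0 0 1"
lemmas E_defs = E0_def E1_def E2_def E3_def E4_def E5_def E6_def E7_def

definition oct_basis :: "'a::field oct set" where "oct_basis = {E0,E1,E2,E3,E4,E5,E6,E7}"

lemma oct_coord_expansion: "(x::'a::field oct) = oct_scale (coord0 x) E0 + oct_scale (coord1 x) E1 + oct_scale (coord2 x) E2
  + oct_scale (coord3 x) E3 + oct_scale (coord4 x) E4 + oct_scale (coord5 x) E5 + oct_scale (coord6 x) E6 + oct_scale (coord7 x) E7"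
  by (simp add: oct_eq_iff E_defs)

lemma independent_oct_basis: "Oct.independent (oct_basis :: 'a::field oct set)"
proof (rule Oct.independent_if_scalars_zero)
  show "finite (oct_basis::'a oct set)" by (simp add: oct_basis_def)
  fix f :: "'a oct \<Rightarrow> 'a" and x :: "'a oct"
  assume s: "(\<Sum>x\<in>oct_basis. oct_scale (f x) x) = 0" and x: "x \<in> oct_basis"
  have "(\<Sum>x\<in>oct_basis. oct_scale (f x) x) = oct_of (f E0) (f E1) (f E2) (f E3) (f E4) (f E5) (f E6) (f E7)"
    by (simp add: oct_basis_def E_defs oct_of_eq_iff oct_eq_iff)
  with s have "oct_of (f E0) (f E1) (f E2) (f E3) (f E4) (f E5) (f E6) (f E7) = oct_of 0 0 0 0 0 0 0 0"
    by (simp add: oct_eq_iff)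
  then show "f x = 0" using x by (auto simp: oct_of_eq_iff oct_basis_def)
qed

lemma span_oct_basis: "Oct.span (oct_basis :: 'a::field oct set) = UNIV"
proof -
  have "x \<in> Oct.span oct_basis" for x :: "'a oct"
    by (subst oct_coord_expansion)
      (intro Oct.span_add Oct.span_scale Oct.span_base; simp add: oct_basis_def)
  then show ?thesis by auto
qed

interpretation Oct: finite_dimensional_vector_space "oct_scale :: 'a::field \<Rightarrow> 'a oct \<Rightarrow> 'a oct" oct_basis
  by unfold_locales (simp_all add: oct_basis_def independent_oct_basis[unfolded oct_basis_def] span_oct_basis[unfolded oct_basis_def])

interpretation OctPair: finite_dimensional_vector_space_pair_1
  "oct_scale :: 'a::field \<Rightarrow> 'a oct \<Rightarrow> 'a oct" oct_basis "oct_scale :: 'a::field \<Rightarrow> 'a oct \<Rightarrow> 'a oct"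
  by unfold_locales

section \<open>Cross product and norm form on the imaginary part\<close>

locale cayley =
  fixes \<alpha> \<beta> \<gamma> :: "'a::field"
  assumes two_nz: "(2::'a) \<noteq> 0" and alpha_nz: "\<alpha> \<noteq> 0" and beta_nz: "\<beta> \<noteq> 0" and gamma_nz: "\<gamma> \<noteq> 0"
begin

text \<open>\<open>cross\<close> and \<open>nform\<close> are read off from \<open>oct_mult\<close> in coordinates; on imaginary
  elements \<open>x y = - nform x y \<cdot> 1 + cross x y\<close> (\<open>oct_mult_Imag\<close>).\<close>

definition cross :: "'a oct \<Rightarrow> 'a oct \<Rightarrow> 'a oct" where
 "cross x y = oct_of 0
   (\<beta> * (coord2 x * coord3 y - coord3 x * coord2 y) + \<gamma> * (coord4 x * coord5 y - coord5 x * coord4 y) + \<beta> * \<gamma> * (coord6 x * coord7 y - coord7 x * coord6 y))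
   (-\<alpha> * (coord1 x * coord3 y - coord3 x * coord1 y) + \<gamma> * (coord4 x * coord6 y - coord6 x * coord4 y) -\<alpha> * \<gamma> * (coord5 x * coord7 y - coord7 x * coord5 y))
   (-(coord1 x * coord2 y - coord2 x * coord1 y) + \<gamma> * (coord4 x * coord7 y - coord7 x * coord4 y) -\<gamma> * (coord5 x * coord6 y - coord6 x * coord5 y))
   (-\<alpha> * (coord1 x * coord5 y - coord5 x * coord1 y) -\<beta> * (coord2 x * coord6 y - coord6 x * coord2 y) +\<alpha> * \<beta> * (coord3 x * coord7 y - coord7 x * coord3 y))
   (-(coord1 x * coord4 y - coord4 x * coord1 y) -\<beta> * (coord2 x * coord7 y - coord7 x * coord2 y) +\<beta> * (coord3 x * coord6 y - coord6 x * coord3 y))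
   (\<alpha> * (coord1 x * coord7 y - coord7 x * coord1 y) -(coord2 x * coord4 y - coord4 x * coord2 y) -\<alpha> * (coord3 x * coord5 y - coord5 x * coord3 y))
   ((coord1 x * coord6 y - coord6 x * coord1 y) -(coord2 x * coord5 y - coord5 x * coord2 y) -(coord3 x * coord4 y - coord4 x * coord3 y))"

definition nform :: "'a oct \<Rightarrow> 'a oct \<Rightarrow> 'a" where
 "nform x y = - \<alpha> * coord1 x * coord1 y - \<beta> * coord2 x * coord2 y + \<alpha>*\<beta>* coord3 x * coord3 y - \<gamma> * coord4 x * coord4 y
    + \<alpha>*\<gamma>* coord5 x*coord5 y + \<beta>*\<gamma>*coord6 x*coord6 y - \<alpha>*\<beta>*\<gamma>*coord7 x * coord7 y"

definition Imag :: "'a oct set" where "Imag = {x. coord0 x = 0}"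

lemma oct_mult_decomp:
  "oct_mult \<alpha> \<beta> \<gamma> x y = oct_scale (coord0 x * coord0 y - nform x y) oct_one
     + oct_scale (coord0 x) (y - oct_scale (coord0 y) oct_one) + oct_scale (coord0 y) (x - oct_scale (coord0 x) oct_one) + cross x y"
  unfolding oct_eq_iff cross_def nform_def
  apply (simp only: coord_oct_of coord_add coord_scale coord_diff coord_one)
  apply (simp add: coord_defs oct_mult_def mult2_def mult1_def cd_mult_def conj2_def conj1_def cd_conj_def
      scale2_def scale1_def pair_scale_def split_def)
  apply (intro conjI; simp add: algebra_simps)
  done

lemma cross_cross:
  assumes "x \<in> Imag" "y \<in> Imag"
  shows "cross x (cross x y) = oct_scale (nform x y) x + oct_scale (- nform x x) y"
  using assms unfolding oct_eq_iff Imag_def cross_def nform_def mem_Collect_eq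
  apply (simp only: coord_oct_of coord_add coord_scale coord_diff)
  apply (intro conjI; simp add: algebra_simps)
  done

lemma nform_cross_cyclic: "nform (cross x y) z = nform x (cross y z)"
  unfolding cross_def nform_def by (simp add: algebra_simps)

text \<open>For the quaternions this term vanishes; for the octonions it does not, but it is
  invariant under cyclic permutations, and that identity replaces associativity below.\<close>

definition cross_defect where "cross_defect a b c = cross a (cross b c) - oct_scale (nform a c) b + oct_scale (nform a b) c"

lemma cross_defect_cyclic:
  assumes "a \<in> Imag" "b \<in> Imag" "c \<in> Imag"
  shows "cross_defect a b c = cross_defect c a b"
  using assms unfolding oct_eq_iff Imag_def cross_defect_def cross_def nform_def mem_Collect_eq
  apply (simp only: coord_oct_of coord_add coord_scale coord_diff)
  apply (intro conjI; simp add: algebra_simps)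
  done

lemma cross_simps[simp]:
  "cross (x + y) z = cross x z + cross y z"
  "cross z (x + y) = cross z x + cross z y"
  "cross (oct_scale c x) y = oct_scale c (cross x y)"
  "cross y (oct_scale c x) = oct_scale c (cross y x)"
  "cross (x - y) z = cross x z - cross y z"
  "cross z (x - y) = cross z x - cross z y"
  "cross (- x) y = - cross x y"
  "cross y (- x) = - cross y x"
  "cross 0 y = 0" "cross y 0 = 0"
  "cross x x = 0"
  by (simp_all add: oct_eq_iff cross_def algebra_simps)

lemma cross_antisym: "cross x y = - cross y x"
  by (simp add: oct_eq_iff cross_def algebra_simps)

lemma nform_simps[simp]:
  "nform (x + y) z = nform x z + nform y z"
  "nform z (x + y) = nform z x + nform z y"
  "nform (oct_scale c x) y = c * nform x y"
  "nform y (oct_scale c x) = c * nform y x"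
  "nform (x - y) z = nform x z - nform y z"
  "nform z (x - y) = nform z x - nform z y"
  "nform (- x) y = - nform x y"
  "nform y (- x) = - nform y x"
  "nform 0 y = 0" "nform y 0 = 0"
  by (simp_all add: nform_def algebra_simps)

lemma nform_sym: "nform x y = nform y x"
  by (simp add: nform_def algebra_simps)

lemma nform_cross_self[simp]:
  "nform (cross x y) x = 0" "nform (cross x y) y = 0" "nform x (cross x y) = 0" "nform y (cross x y) = 0"
  by (simp_all add: nform_def cross_def algebra_simps)

lemma Imag_closed[simp]:
  "0 \<in> Imag" "cross x y \<in> Imag"
  "x \<in> Imag \<Longrightarrow> y \<in> Imag \<Longrightarrow> x + y \<in> Imag"
  "x \<in> Imag \<Longrightarrow> y \<in> Imag \<Longrightarrow> x - y \<in> Imag"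
  "x \<in> Imag \<Longrightarrow> - x \<in> Imag"
  "x \<in> Imag \<Longrightarrow> oct_scale c x \<in> Imag"
  by (simp_all add: Imag_def cross_def)

lemma subspace_Imag: "Oct.subspace Imag"
  by (simp add: Oct.subspace_def)

lemma oct_scale_simps:
  "oct_scale a (x + y) = oct_scale a x + oct_scale a y"
  "oct_scale (a + b) x = oct_scale a x + oct_scale b x"
  "oct_scale a (oct_scale b x) = oct_scale (a * b) x"
  "oct_scale 1 x = x" "oct_scale 0 x = 0" "oct_scale a 0 = 0"
  "oct_scale a (x - y) = oct_scale a x - oct_scale a y"
  "oct_scale (a - b) x = oct_scale a x - oct_scale b x"
  "oct_scale a (- x) = - oct_scale a x"
  "oct_scale (- a) x = - oct_scale a x"
  by (simp_all add: oct_eq_iff algebra_simps)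

lemma cross_cross_right:
  assumes "x \<in> Imag" "y \<in> Imag"
  shows "cross y (cross x y) = oct_scale (nform y y) x + oct_scale (- nform x y) y"
proof -
  have "cross y (cross x y) = - cross y (cross y x)" by (subst cross_antisym) simp
  also have "\<dots> = oct_scale (nform y y) x + oct_scale (- nform x y) y"
    using cross_cross[OF assms(2,1)] by (simp add: nform_sym)
  finally show ?thesis .
qed

lemma nform_cross_cross:
  assumes "p \<in> Imag" "y \<in> Imag" "y' \<in> Imag"
  shows "nform (cross p y) (cross p y') = nform p p * nform y y' - nform p y * nform p y'"
proof -
  have "nform (cross p y) (cross p y') = - nform (cross y p) (cross p y')" by (subst cross_antisym) simp
  also have "\<dots> = - nform y (cross p (cross p y'))" by (simp only: nform_cross_cyclic)
  also have "\<dots> = nform p p * nform y y' - nform p y * nform p y'"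
    by (subst cross_cross[OF assms(1,3)]) (simp add: nform_sym algebra_simps)
  finally show ?thesis .
qed

lemma cross_eigenvectors:
  assumes imag: "p \<in> Imag" "z \<in> Imag" "u \<in> Imag"
    and pz: "cross p z = z" and pu: "cross p u = - u"
  shows "cross z u = oct_scale (- nform z u) p"
proof -
  have bpz: "nform p z = 0" using nform_cross_self(3)[of p z] pz by simp
  have bpu: "nform p u = 0" using nform_cross_self(3)[of p u] pu by simp
  have 1: "cross_defect p z u = cross_defect u p z" using cross_defect_cyclic[OF imag] .
  have 2: "cross_defect z u p = cross_defect p z u" using cross_defect_cyclic[OF imag(2,3,1)] .
  have up: "cross u p = u" using pu by (subst cross_antisym) simp
  have e1: "cross_defect u p z = cross u z - oct_scale (nform u z) p"
    using bpu by (simp add: cross_defect_def pz nform_sym)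
  have e2: "cross_defect z u p = cross z u + oct_scale (nform z u) p"
    using bpz by (simp add: cross_defect_def up nform_sym)
  from 1 2 e1 e2 have "cross u z - oct_scale (nform u z) p = cross z u + oct_scale (nform z u) p" by simp
  then have "- cross z u - oct_scale (nform z u) p = cross z u + oct_scale (nform z u) p"
    by (metis cross_antisym nform_sym)
  then have "- (cross z u + oct_scale (nform z u) p) = cross z u + oct_scale (nform z u) p"
    by (simp only: minus_add_distrib diff_conv_add_uminus)
  then have "cross z u + oct_scale (nform z u) p = 0" by (rule Oct.vector_neg_eq_self_imp_zero[OF two_nz])
  then have "cross z u = - oct_scale (nform z u) p" by (simp add: add_eq_0_iff2)
  then show ?thesis by (simp add: oct_scale_simps)
qed

lemma cross_commuting_cross:
  assumes imag: "u \<in> Imag" "v \<in> Imag" "w \<in> Imag"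
    and uv: "nform u v = 0" "cross u v = 0"
  shows "cross v (cross u w) = oct_scale (2 * nform v w) u - oct_scale (nform u w) v"
proof -
  have vu: "cross v u = 0" using uv(2) cross_antisym[of v u] by simp
  have "cross_defect v u w = cross_defect w v u" using cross_defect_cyclic[OF imag(2,1,3)] .
  moreover have "cross_defect v u w = cross v (cross u w) - oct_scale (nform v w) u"
    using uv(1) by (simp add: cross_defect_def nform_sym)
  moreover have "cross_defect w v u = oct_scale (nform v w) u - oct_scale (nform u w) v"
    using vu by (simp add: cross_defect_def nform_sym algebra_simps)
  ultimately have "cross v (cross u w) = oct_scale (nform v w) u + oct_scale (nform v w) u - oct_scale (nform u w) v"
    by (simp add: algebra_simps diff_eq_eq)
  then show ?thesis by (simp add: Oct.double_scale)
qed

section \<open>Blocks through a plane\<close>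

text \<open>The blocks of the design; by \<open>blocks_eq_is_block\<close> they are exactly the \<open>im H\<close>.\<close>

definition is_block :: "'a oct set \<Rightarrow> bool" where
  "is_block U \<longleftrightarrow> Oct.subspace U \<and> U \<subseteq> Imag \<and> Oct.dim U = 3 \<and> (\<forall>x\<in>U. \<forall>y\<in>U. cross x y \<in> U)"

lemma span_cross_closed:
  assumes gen: "\<And>s t. s \<in> S \<Longrightarrow> t \<in> S \<Longrightarrow> cross s t \<in> Oct.span S"
    and a: "a \<in> Oct.span S" and b: "b \<in> Oct.span S"
  shows "cross a b \<in> Oct.span S"
proof -
  have inner: "cross s b \<in> Oct.span S" if s: "s \<in> S" for s
    using b
  proof (induction rule: Oct.span_induct_alt)
    case base then show ?case by (simp add: Oct.span_zero)
  next
    case (step c x y)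
    then show ?case using gen[OF s] by (simp add: Oct.span_add Oct.span_scale)
  qed
  show ?thesis using a
  proof (induction rule: Oct.span_induct_alt)
    case base then show ?case by (simp add: Oct.span_zero)
  next
    case (step c x y)
    then show ?case using inner by (simp add: Oct.span_add Oct.span_scale)
  qed
qed

lemma is_block_span3:
  assumes imag: "x \<in> Imag" "y \<in> Imag" "z \<in> Imag" and ind: "indep2 oct_scale x y" and nz: "z \<notin> Oct.span {x, y}"
    and c1: "cross x y \<in> Oct.span {x, y, z}" and c2: "cross x z \<in> Oct.span {x, y, z}"
    and c3: "cross y z \<in> Oct.span {x, y, z}"
  shows "is_block (Oct.span {x, y, z})"
  unfolding is_block_def
proof (intro conjI ballI)
  show "Oct.subspace (Oct.span {x, y, z})" by simp
  show "Oct.span {x, y, z} \<subseteq> Imag" by (rule Oct.span_minimal) (use imag subspace_Imag in auto)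
  show "Oct.dim (Oct.span {x, y, z}) = 3" using Oct.dim_span_triple[OF ind nz] .
  fix a b assume "a \<in> Oct.span {x, y, z}" "b \<in> Oct.span {x, y, z}"
  then show "cross a b \<in> Oct.span {x, y, z}"
  proof (rule span_cross_closed[rotated])
    have neg: "cross t s \<in> Oct.span {x, y, z}" if "cross s t \<in> Oct.span {x, y, z}" for s t
      using Oct.span_neg[OF that] cross_antisym[of t s] by simp
    fix s t assume "s \<in> {x, y, z}" "t \<in> {x, y, z}"
    then show "cross s t \<in> Oct.span {x, y, z}"
      using c1 c2 c3 neg[OF c1] neg[OF c2] neg[OF c3] by (auto simp: Oct.span_zero)
  qed
qed

lemma E_in_Imag[simp]: "E1 \<in> Imag" "E2 \<in> Imag" "E3 \<in> Imag" "E4 \<in> Imag" "E5 \<in> Imag" "E6 \<in> Imag" "E7 \<in> Imag"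
  by (simp_all add: Imag_def E_defs)

lemma nform_nondegenerate:
  assumes "x \<in> Imag" "x \<noteq> 0" shows "\<exists>w\<in>Imag. nform x w \<noteq> 0"
proof -
  have "coord1 x \<noteq> 0 \<or> coord2 x \<noteq> 0 \<or> coord3 x \<noteq> 0 \<or> coord4 x \<noteq> 0 \<or> coord5 x \<noteq> 0 \<or> coord6 x \<noteq> 0 \<or> coord7 x \<noteq> 0"
    using assms by (auto simp: Imag_def oct_eq_iff)
  then show ?thesis
  proof (elim disjE)
    assume "coord1 x \<noteq> 0" then have "nform x E1 \<noteq> 0" using alpha_nz by (simp add: nform_def E_defs)
    then show ?thesis using E_in_Imag by blast
  next
    assume "coord2 x \<noteq> 0" then have "nform x E2 \<noteq> 0" using beta_nz by (simp add: nform_def E_defs)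
    then show ?thesis using E_in_Imag by blast
  next
    assume "coord3 x \<noteq> 0" then have "nform x E3 \<noteq> 0" using alpha_nz beta_nz by (simp add: nform_def E_defs)
    then show ?thesis using E_in_Imag by blast
  next
    assume "coord4 x \<noteq> 0" then have "nform x E4 \<noteq> 0" using gamma_nz by (simp add: nform_def E_defs)
    then show ?thesis using E_in_Imag by blast
  next
    assume "coord5 x \<noteq> 0" then have "nform x E5 \<noteq> 0" using alpha_nz gamma_nz by (simp add: nform_def E_defs)
    then show ?thesis using E_in_Imag by blast
  next
    assume "coord6 x \<noteq> 0" then have "nform x E6 \<noteq> 0" using beta_nz gamma_nz by (simp add: nform_def E_defs)
    then show ?thesis using E_in_Imag by blast
  next
    assume "coord7 x \<noteq> 0" then have "nform x E7 \<noteq> 0" using alpha_nz beta_nz gamma_nz by (simp add: nform_def E_defs)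
    then show ?thesis using E_in_Imag by blast
  qed
qed

lemma nform_eq_one:
  assumes "x \<in> Imag" "x \<noteq> 0" shows "\<exists>w\<in>Imag. nform x w = 1"
proof -
  obtain w where w: "w \<in> Imag" "nform x w \<noteq> 0" using nform_nondegenerate[OF assms] by blast
  then have "oct_scale (inverse (nform x w)) w \<in> Imag" "nform x (oct_scale (inverse (nform x w)) w) = 1"
    by simp_all
  then show ?thesis by blast
qed

lemma nform_dual_vector:
  assumes "x \<in> Imag" "y \<in> Imag" "indep2 oct_scale x y"
  shows "\<exists>w\<in>Imag. nform x w = 1 \<and> nform y w = 0"
proof -
  have ny: "y \<noteq> 0" using Oct.indep2_nonzero[OF assms(3)] by blast
  obtain w1 where w1: "w1 \<in> Imag" "nform y w1 = 1" using nform_eq_one[OF assms(2) ny] by blast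
  define x' where "x' = x - oct_scale (nform x w1) y"
  have x'_im: "x' \<in> Imag" using assms by (simp add: x'_def)
  have "x' \<noteq> 0"
  proof
    assume "x' = 0"
    then have "oct_scale 1 x + oct_scale (- nform x w1) y = 0" by (simp add: x'_def oct_scale_simps)
    then have "(1::'a) = 0 \<and> - nform x w1 = 0" using assms(3) unfolding indep2_def by blast
    then show False by simp
  qed
  obtain w2 where w2: "w2 \<in> Imag" "nform x' w2 = 1" using nform_eq_one[OF x'_im \<open>x' \<noteq> 0\<close>] by blast
  define w where "w = w2 - oct_scale (nform y w2) w1"
  have "w \<in> Imag" using w1 w2 by (simp add: w_def)
  moreover have "nform y w = 0" using w1 by (simp add: w_def)
  moreover have "nform x w = 1"
  proof -
    have "nform x w = nform x w2 - nform y w2 * nform x w1" by (simp add: w_def)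
    also have "\<dots> = nform x' w2" by (simp add: x'_def algebra_simps nform_sym)
    finally show ?thesis using w2 by simp
  qed
  ultimately show ?thesis by blast
qed

lemma dependent_cross_coeffs:
  assumes imag: "x \<in> Imag" "y \<in> Imag" and ind: "indep2 oct_scale x y" and e: "cross x y = oct_scale b x + oct_scale c y"
  shows "c * c = - nform x x \<and> b * b = - nform y y \<and> nform x y = b * c"
proof -
  have 1: "cross x (cross x y) = oct_scale (c*b) x + oct_scale (c*c) y"
    by (simp add: e oct_eq_iff algebra_simps)
  have "nform x y = c * b \<and> - nform x x = c * c"
    using Oct.indep2_coeffs_eq[OF ind, of "nform x y" "- nform x x" "c*b" "c*c"] cross_cross[OF imag] 1 by simp
  moreover have 2: "cross y (cross x y) = oct_scale (-(b*b)) x + oct_scale (-(b*c)) y"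
    by (simp add: e cross_antisym[of y x] oct_eq_iff algebra_simps)
  have "nform y y = -(b*b) \<and> - nform x y = -(b*c)"
    using Oct.indep2_coeffs_eq[OF ind, of "nform y y" "- nform x y" "-(b*b)" "-(b*c)"] cross_cross_right[OF imag] 2 by simp
  ultimately show ?thesis by (simp add: mult.commute)
qed

lemma opposite_eigenvector:
  assumes imag: "p \<in> Imag" "b \<in> Imag" "c \<in> Imag" and np: "nform p p = -1"
    and ind: "indep2 oct_scale b c" and pb: "cross p b = b" and pc: "cross p c = c"
  obtains x where "x \<in> Imag" "cross p x = - x" "nform b x = 2" "nform c x = 0"
proof -
  obtain x0 where x0: "x0 \<in> Imag" "nform b x0 = 1" "nform c x0 = 0"
    using nform_dual_vector[OF imag(2,3) ind] by blast
  have bp: "nform b p = 0" using nform_cross_self(1)[of p b] pb by simp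
  have cp: "nform c p = 0" using nform_cross_self(1)[of p c] pc by simp
  define x1 where "x1 = x0 + oct_scale (nform p x0) p"
  have x1_im: "x1 \<in> Imag" using x0 imag by (simp add: x1_def)
  have px1: "nform p x1 = 0" using np by (simp add: x1_def)
  have bx1: "nform b x1 = 1" using x0 bp by (simp add: x1_def)
  have cx1: "nform c x1 = 0" using x0 cp by (simp add: x1_def)
  have ppx1: "cross p (cross p x1) = x1"
    using cross_cross[OF imag(1) x1_im] px1 np by (simp add: oct_scale_simps)
  have flip: "nform q (cross p x1) = - nform q x1" if "cross p q = q" for q
  proof -
    have "nform q (cross p x1) = nform (cross q p) x1" by (rule nform_cross_cyclic[symmetric])
    also have "\<dots> = nform (- q) x1" using that cross_antisym[of q p] by simp
    finally show ?thesis by simp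
  qed
  define x where "x = x1 - cross p x1"
  have "x \<in> Imag" using x1_im by (simp add: x_def)
  moreover have "cross p x = - x" by (simp add: x_def ppx1)
  moreover have "nform b x = 2" using bx1 flip[OF pb] by (simp add: x_def)
  moreover have "nform c x = 0" using cx1 flip[OF pc] by (simp add: x_def)
  ultimately show ?thesis by (rule that)
qed

lemma no_commuting_eigenpair:
  assumes imag: "p \<in> Imag" "b \<in> Imag" "c \<in> Imag" and np: "nform p p = -1"
    and ind: "indep2 oct_scale b c" and pb: "cross p b = b" and pc: "cross p c = c" and bc: "cross b c = 0"
  shows False
proof -
  obtain x where x: "x \<in> Imag" "cross p x = - x" "nform b x = 2" "nform c x = 0"
    using opposite_eigenvector[OF imag np ind pb pc] .
  have cx: "cross c x = 0" using cross_eigenvectors[OF imag(1,3) x(1) pc x(2)] x(4) by simp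
  have "nform b c = nform (cross p b) c" using pb by simp
  also have "\<dots> = nform p (cross b c)" by (rule nform_cross_cyclic)
  finally have bfbc: "nform b c = 0" using bc by simp
  \<comment> \<open>cyclic symmetry at \<open>(b, c, x)\<close> forces \<open>-2c = 2c\<close>\<close>
  have "cross_defect b c x = cross_defect x b c" using cross_defect_cyclic[OF imag(2,3) x(1)] .
  moreover have "cross_defect b c x = - oct_scale 2 c"
    using cx x(3) bfbc by (simp add: cross_defect_def oct_scale_simps)
  moreover have "cross_defect x b c = oct_scale 2 c"
    using bc x(3,4) by (simp add: cross_defect_def nform_sym oct_scale_simps)
  ultimately have "- oct_scale 2 c = oct_scale 2 c" by simp
  then have "oct_scale 2 c = 0" by (rule Oct.vector_neg_eq_self_imp_zero[OF two_nz])
  then show False using two_nz Oct.indep2_nonzero[OF ind] by simp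
qed

lemma is_block_span_cross:
  assumes imag: "x \<in> Imag" "y \<in> Imag" and ind: "indep2 oct_scale x y"
    and nin: "cross x y \<notin> Oct.span {x, y}"
  shows "is_block (Oct.span {x, y, cross x y})"
proof (rule is_block_span3[OF imag Imag_closed(2) ind nin])
  show "cross x y \<in> Oct.span {x, y, cross x y}" by (simp add: oct_span_intros)
  show "cross x (cross x y) \<in> Oct.span {x, y, cross x y}"
    using cross_cross[OF imag] by (simp add: oct_span_intros)
  show "cross y (cross x y) \<in> Oct.span {x, y, cross x y}"
    using cross_cross_right[OF imag] by (simp add: oct_span_intros)
qed

lemma dependent_cross_isotropic_basis:
  assumes imag: "x \<in> Imag" "y \<in> Imag" and ind: "indep2 oct_scale x y"
    and inspan: "cross x y \<in> Oct.span {x, y}"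
  obtains u v where "u \<in> Oct.span {x, y}" "v \<in> Oct.span {x, y}" "indep2 oct_scale u v"
    "nform u u = 0" "nform u v = 0"
proof -
  obtain b c where e: "cross x y = oct_scale b x + oct_scale c y"
    using inspan Oct.in_span_pair by blast
  have D: "nform x x = - (c * c)" "nform y y = - (b * b)" "nform x y = b * c" "nform y x = b * c"
    using dependent_cross_coeffs[OF imag ind e] nform_sym[of y x] by auto
  have xy: "x \<in> Oct.span {x, y}" "y \<in> Oct.span {x, y}" by (auto intro: Oct.span_base)
  show ?thesis
  proof (cases "b = 0 \<and> c = 0")
    case True
    then show ?thesis using that xy ind D by simp
  next
    case False
    define u where "u = oct_scale b x + oct_scale c y"
    have "u \<in> Oct.span {x, y}" unfolding u_def Oct.in_span_pair by blast
    moreover have ux: "nform u x = 0" and uy: "nform u y = 0"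
      unfolding u_def by (simp_all add: D algebra_simps)
    moreover have "nform u u = b * nform u x + c * nform u y"
      unfolding u_def by (simp add: nform_sym algebra_simps)
    then have "nform u u = 0" using ux uy by simp
    moreover have "indep2 oct_scale u y \<or> indep2 oct_scale u x"
    proof (cases "b = 0")
      case False
      then show ?thesis using Oct.indep2_add_scaled[OF ind] by (simp add: u_def)
    next
      case True
      then have "c \<noteq> 0" using \<open>\<not> (b = 0 \<and> c = 0)\<close> by simp
      then show ?thesis
        using Oct.indep2_add_scaled[OF Oct.indep2_sym[OF ind], of c b] by (simp add: u_def add.commute)
    qed
    ultimately show ?thesis using that xy by blast
  qed
qed

lemma commuting_isotropic_block:
  assumes imag: "u \<in> Imag" "v \<in> Imag" "w \<in> Imag" and ind: "indep2 oct_scale u v"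
    and uu: "nform u u = 0" and uv: "nform u v = 0" "cross u v = 0"
    and nin: "cross u w \<notin> Oct.span {u, v}"
  shows "is_block (Oct.span {u, v, cross u w})"
proof (rule is_block_span3[OF imag(1,2) Imag_closed(2) ind nin])
  show "cross u v \<in> Oct.span {u, v, cross u w}" using uv(2) by (simp add: oct_span_intros)
  show "cross u (cross u w) \<in> Oct.span {u, v, cross u w}"
    using cross_cross[OF imag(1,3)] uu by (simp add: oct_span_intros)
  show "cross v (cross u w) \<in> Oct.span {u, v, cross u w}"
    using cross_commuting_cross[OF imag uv] by (simp add: oct_span_intros)
qed

lemma cross_commuting_span:
  assumes "cross u v = 0" "x \<in> Oct.span {u, v}"
  shows "cross u x = 0" "cross v x = 0"
  using assms cross_antisym[of v u] by (auto simp: Oct.in_span_pair)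

lemma commuting_isotropic_pair_covered:
  assumes imag: "u \<in> Imag" "v \<in> Imag" and ind: "indep2 oct_scale u v"
    and uu: "nform u u = 0" and uv: "nform u v = 0" "cross u v = 0"
  obtains U where "is_block U" "Oct.span {u, v} \<subseteq> U"
proof -
  obtain w where w: "w \<in> Imag" "nform u w = 1" "nform v w = 0"
    using nform_dual_vector[OF imag ind] by blast
  have "cross u (cross u w) = u" using cross_cross[OF imag(1) w(1)] w(2) uu by simp
  then have "cross u w \<notin> Oct.span {u, v}"
    using cross_commuting_span(1)[OF uv(2)] Oct.indep2_nonzero(1)[OF ind] by metis
  then have "is_block (Oct.span {u, v, cross u w})"
    by (rule commuting_isotropic_block[OF imag w(1) ind uu uv])
  moreover have "Oct.span {u, v} \<subseteq> Oct.span {u, v, cross u w}" by (rule Oct.span_mono) auto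
  ultimately show ?thesis by (rule that)
qed

lemma eigen_pair_covered:
  assumes imag: "u \<in> Imag" "v \<in> Imag" and ind: "indep2 oct_scale u v"
    and vv: "nform v v = -1" and uv: "nform u v = 0" "cross u v = u"
  obtains U where "is_block U" "Oct.span {u, v} \<subseteq> U"
proof -
  have vu: "cross v u = - u" using uv(2) cross_antisym[of v u] by simp
  obtain w where w: "w \<in> Imag" "nform u w \<noteq> 0"
    using nform_nondegenerate[OF imag(1) Oct.indep2_nonzero(1)[OF ind]] by blast
  define w' where "w' = w + oct_scale (nform v w) v"
  have w'_im: "w' \<in> Imag" using w imag by (simp add: w'_def)
  have vw': "nform v w' = 0" using vv by (simp add: w'_def)
  have uw': "nform u w' \<noteq> 0" using uv(1) w(2) by (simp add: w'_def)
  have vvw': "cross v (cross v w') = w'"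
    using cross_cross[OF imag(2) w'_im] vw' vv by (simp add: oct_scale_simps)
  define z where "z = w' + cross v w'"
  have z_im: "z \<in> Imag" using w'_im by (simp add: z_def)
  have vz: "cross v z = z" by (simp add: z_def vvw' add.commute)
  have uz: "cross u z = oct_scale (nform z u) v"
    using cross_eigenvectors[OF imag(2) z_im imag(1) vz vu] cross_antisym[of u z]
    by (simp add: oct_scale_simps)
  have "z \<noteq> 0"
  proof
    assume "z = 0"
    then have "cross v w' = - w'" unfolding z_def by (simp add: add_eq_0_iff)
    moreover have "nform u (cross v w') = nform u w'"
      using nform_cross_cyclic[of u v w', symmetric] uv(2) by simp
    ultimately have "- nform u w' = nform u w'" by simp
    with uw' show False using neg_eq_self_imp_zero[OF two_nz] by blast
  qed
  have "z \<notin> Oct.span {u, v}"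
  proof
    assume "z \<in> Oct.span {u, v}"
    then obtain a d where zd: "z = oct_scale a u + oct_scale d v" using Oct.in_span_pair by blast
    then have "oct_scale a u + oct_scale d v = oct_scale (- a) u + oct_scale 0 v"
      using vz vu by (simp add: oct_scale_simps)
    then have "a = - a \<and> d = 0" using Oct.indep2_coeffs_eq[OF ind] by blast
    then have "z = 0" using zd neg_eq_self_imp_zero[OF two_nz, of a] by simp
    with \<open>z \<noteq> 0\<close> show False by simp
  qed
  then have "is_block (Oct.span {u, v, z})"
    using is_block_span3[OF imag z_im ind] uv(2) uz vz by (simp add: oct_span_intros)
  moreover have "Oct.span {u, v} \<subseteq> Oct.span {u, v, z}" by (rule Oct.span_mono) auto
  ultimately show ?thesis by (rule that)
qed

lemma isotropic_pair_covered:
  assumes imag: "u \<in> Imag" "v \<in> Imag" and ind: "indep2 oct_scale u v"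
    and uu: "nform u u = 0" and uv: "nform u v = 0" and inspan: "cross u v \<in> Oct.span {u, v}"
  obtains U where "is_block U" "Oct.span {u, v} \<subseteq> U"
proof -
  obtain b c where e: "cross u v = oct_scale b u + oct_scale c v"
    using inspan Oct.in_span_pair by blast
  have D: "c * c = - nform u u" "b * b = - nform v v"
    using dependent_cross_coeffs[OF imag ind e] by auto
  then have e': "cross u v = oct_scale b u" using e uu by simp
  show ?thesis
  proof (cases "b = 0")
    case True
    then have "cross u v = 0" using e' by simp
    then show ?thesis using commuting_isotropic_pair_covered[OF imag ind uu uv] that by blast
  next
    case False
    define v' where "v' = oct_scale (inverse b) v"
    have v'_im: "v' \<in> Imag" using imag by (simp add: v'_def)
    have ind': "indep2 oct_scale u v'"
      using Oct.indep2_sym[OF Oct.indep2_add_scaled[OF Oct.indep2_sym[OF ind], of "inverse b" 0]] False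
      by (simp add: v'_def)
    have vv: "nform v v = - (b * b)" using D(2) by simp
    have "nform v' v' = -1" using False by (simp add: v'_def vv field_simps)
    moreover have "nform u v' = 0" "cross u v' = u" using uv e' False by (simp_all add: v'_def)
    ultimately obtain U where U: "is_block U" "Oct.span {u, v'} \<subseteq> U"
      using eigen_pair_covered[OF imag(1) v'_im ind'] by blast
    have "v = oct_scale b v'" using False by (simp add: v'_def)
    then have "Oct.span {u, v} \<subseteq> Oct.span {u, v'}"
      by (intro Oct.span_minimal) (auto simp: oct_span_intros)
    then show ?thesis using U that by blast
  qed
qed

lemma span_pair_cross_closed:
  assumes "cross x y \<in> Oct.span {x, y}" "a \<in> Oct.span {x, y}" "b \<in> Oct.span {x, y}"
  shows "cross a b \<in> Oct.span {x, y}"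
proof (rule span_cross_closed[OF _ assms(2,3)])
  have "cross y x \<in> Oct.span {x, y}"
    using Oct.span_neg[OF assms(1)] cross_antisym[of y x] by simp
  then show "cross s t \<in> Oct.span {x, y}" if "s \<in> {x, y}" "t \<in> {x, y}" for s t
    using that assms(1) by (auto simp: Oct.span_zero)
qed

lemma subspace2_covered:
  assumes W: "Oct.subspace W" "W \<subseteq> Imag" "Oct.dim W = 2"
  obtains U where "is_block U" "W \<subseteq> U"
proof -
  obtain x y where xy: "x \<in> W" "y \<in> W" "indep2 oct_scale x y" "W = Oct.span {x, y}"
    using Oct.dim2_subspace_basis[OF W(1,3)] by blast
  have imag: "x \<in> Imag" "y \<in> Imag" using xy W(2) by auto
  show ?thesis
  proof (cases "cross x y \<in> Oct.span {x, y}")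
    case False
    moreover have "W \<subseteq> Oct.span {x, y, cross x y}" unfolding xy(4) by (rule Oct.span_mono) auto
    ultimately show ?thesis using is_block_span_cross[OF imag xy(3)] that by blast
  next
    case True
    obtain u v where uv: "u \<in> Oct.span {x, y}" "v \<in> Oct.span {x, y}" "indep2 oct_scale u v"
      "nform u u = 0" "nform u v = 0"
      using dependent_cross_isotropic_basis[OF imag xy(3) True] by blast
    have uv_im: "u \<in> Imag" "v \<in> Imag" using uv(1,2) xy(4) W(2) by auto
    have W_eq: "W = Oct.span {u, v}" using Oct.dim2_subspace_eq_span[OF W(1,3)] uv xy(4) by blast
    have "cross u v \<in> Oct.span {u, v}" using span_pair_cross_closed[OF True uv(1,2)] xy(4) W_eq by simp
    then show ?thesis using isotropic_pair_covered[OF uv_im uv(3,4,5)] W_eq that by blast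
  qed
qed

section \<open>Every block has a generating plane\<close>

lemma block_eq_span_cross:
  assumes "is_block U" "x \<in> U" "y \<in> U" "indep2 oct_scale x y" "cross x y \<notin> Oct.span {x, y}"
  shows "U = Oct.span {x, y, cross x y}"
  using Oct.dim3_subspace_eq_span[of U x y "cross x y"] assms unfolding is_block_def by blast

lemma cross_not_indep2:
  assumes "\<not> indep2 oct_scale x y" shows "cross x y = 0"
  using Oct.not_indep2_collinear[OF assms] by auto

lemma dependent_cross_nform_sq:
  assumes imag: "x \<in> Imag" "y \<in> Imag" and ind: "indep2 oct_scale x y"
    and inspan: "cross x y \<in> Oct.span {x, y}"
  shows "nform x y * nform x y = nform x x * nform y y"
proof -
  obtain b c where "cross x y = oct_scale b x + oct_scale c y"
    using inspan Oct.in_span_pair by blast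
  from dependent_cross_coeffs[OF imag ind this]
  have "nform x x = - (c * c)" "nform y y = - (b * b)" "nform x y = b * c" by auto
  then show ?thesis by (simp add: algebra_simps)
qed

lemma dependent_cross_isotropic_zero:
  assumes imag: "x \<in> Imag" "y \<in> Imag" and ind: "indep2 oct_scale x y"
    and inspan: "cross x y \<in> Oct.span {x, y}" and iso: "nform x x = 0" "nform y y = 0"
  shows "cross x y = 0"
proof -
  obtain b c where e: "cross x y = oct_scale b x + oct_scale c y"
    using inspan Oct.in_span_pair by blast
  from dependent_cross_coeffs[OF imag ind e] iso have "b = 0" "c = 0" by auto
  then show ?thesis using e by simp
qed

lemma orthogonal_indep2:
  assumes "nform t t \<noteq> 0" "nform t r = 0" "r \<noteq> 0"
  shows "indep2 oct_scale t r"
  unfolding indep2_def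
proof (intro allI impI)
  fix s q assume h: "oct_scale s t + oct_scale q r = 0"
  have "nform t (oct_scale s t + oct_scale q r) = s * nform t t" using assms(2) by simp
  then have "s = 0" using h assms(1) by simp
  with h assms(3) show "s = 0 \<and> q = 0" by simp
qed

lemma orthogonal_dependent_cross:
  assumes imag: "t \<in> Imag" "r \<in> Imag" and tt: "nform t t \<noteq> 0" and tr: "nform t r = 0"
    and r: "r \<noteq> 0" and inspan: "cross t r \<in> Oct.span {t, r}"
  shows "nform r r = 0" "\<exists>g. cross t r = oct_scale g r \<and> g * g = - nform t t"
proof -
  have ind: "indep2 oct_scale t r" using orthogonal_indep2[OF tt tr r] .
  obtain b c where e: "cross t r = oct_scale b t + oct_scale c r"
    using inspan Oct.in_span_pair by blast
  have D: "c * c = - nform t t" "b * b = - nform r r" "nform t r = b * c"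
    using dependent_cross_coeffs[OF imag ind e] by auto
  have "nform t r * nform t r = nform t t * nform r r"
    using dependent_cross_nform_sq[OF imag ind inspan] .
  then show rr: "nform r r = 0" using tr tt by simp
  then have "b = 0" using D(2) by simp
  then show "\<exists>g. cross t r = oct_scale g r \<and> g * g = - nform t t" using e D(1) by auto
qed

lemma nform_orthogonal_pair:
  assumes U: "Oct.subspace U" "Oct.dim U = 3" and t: "t \<in> U" "nform t t \<noteq> 0"
  obtains a b where "a \<in> U" "b \<in> U" "indep2 oct_scale a b" "nform t a = 0" "nform t b = 0"
proof -
  define R where "R = {x \<in> U. nform t x = 0}"
  have R: "Oct.subspace R"
    unfolding Oct.subspace_def R_def using U(1)
    by (auto simp: Oct.subspace_0 Oct.subspace_add Oct.subspace_scale)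
  have "U \<subseteq> Oct.span (insert t R)"
  proof
    fix x assume x: "x \<in> U"
    have "x - oct_scale (nform t x / nform t t) t \<in> R"
      unfolding R_def using x t U(1) by (auto simp: Oct.subspace_diff Oct.subspace_scale)
    then show "x \<in> Oct.span (insert t R)" unfolding Oct.span_breakdown_eq by (blast intro: Oct.span_base)
  qed
  then have "Oct.dim U \<le> Oct.dim (insert t R)" by (rule Oct.dim_mono)
  moreover have "Oct.dim (insert t R) \<le> Oct.dim R + 1"
    using Oct.dim_insert[of t R] by (simp split: if_splits)
  ultimately have "Oct.dim R \<ge> 2" using U(2) by simp
  then obtain a b where "a \<in> R" "b \<in> R" "indep2 oct_scale a b" using Oct.dim_ge2_indep2[OF R] by blast
  then show ?thesis using that unfolding R_def by blast
qed

definition cross_degenerate :: "'a oct set \<Rightarrow> bool" where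
  "cross_degenerate U \<longleftrightarrow> (\<forall>x\<in>U. \<forall>y\<in>U. indep2 oct_scale x y \<longrightarrow> cross x y \<in> Oct.span {x, y})"

lemma cross_degenerate_block_anisotropic:
  assumes blk: "is_block U" and deg: "cross_degenerate U" and t: "t \<in> U" "nform t t \<noteq> 0"
  shows False
proof -
  from blk have U: "Oct.subspace U" "U \<subseteq> Imag" "Oct.dim U = 3" by (auto simp: is_block_def)
  obtain a b where ab: "a \<in> U" "b \<in> U" "indep2 oct_scale a b" "nform t a = 0" "nform t b = 0"
    using nform_orthogonal_pair[OF U(1,3) t] by blast
  \<comment> \<open>every nonzero \<open>r \<bottom> t\<close> is an eigenvector of \<open>cross t\<close>; rescaling \<open>t\<close> then produces
     the configuration excluded by \<open>no_commuting_eigenpair\<close>\<close>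
  have eigen: "nform r r = 0" "\<exists>g. cross t r = oct_scale g r \<and> g * g = - nform t t"
    if "r \<in> U" "nform t r = 0" "r \<noteq> 0" for r
  proof -
    have "indep2 oct_scale t r" using orthogonal_indep2[OF t(2)] that(2,3) .
    then have "cross t r \<in> Oct.span {t, r}" using deg t(1) that(1) unfolding cross_degenerate_def by blast
    then show "nform r r = 0" "\<exists>g. cross t r = oct_scale g r \<and> g * g = - nform t t"
      using orthogonal_dependent_cross[of t r] t that U(2) by auto
  qed
  have nz: "a \<noteq> 0" "b \<noteq> 0" "a + b \<noteq> 0"
    using Oct.indep2_nonzero[OF ab(3)] Oct.indep2_coeffs_eq[OF ab(3), of 1 1 0 0] by auto
  obtain ga where ga: "cross t a = oct_scale ga a" "ga * ga = - nform t t" using eigen(2)[OF ab(1,4) nz(1)] by blast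
  obtain gb where gb: "cross t b = oct_scale gb b" using eigen(2)[OF ab(2,5) nz(2)] by blast
  obtain gab where gab: "cross t (a + b) = oct_scale gab (a + b)"
    using eigen(2)[of "a + b"] ab U(1) nz(3) by (auto simp: Oct.subspace_add)
  have "oct_scale ga a + oct_scale gb b = oct_scale gab a + oct_scale gab b"
    using gab ga gb by (simp add: oct_scale_simps)
  then have gb_ga: "gb = ga" using Oct.indep2_coeffs_eq[OF ab(3)] by blast
  have ga_nz: "ga \<noteq> 0" using ga(2) t(2) by auto
  have ab_im: "a \<in> Imag" "b \<in> Imag" using ab U(2) by auto
  have "cross a b \<in> Oct.span {a, b}" using deg ab unfolding cross_degenerate_def by blast
  then have ab0: "cross a b = 0"
    using dependent_cross_isotropic_zero[OF ab_im ab(3)] eigen(1) ab nz by blast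
  define p where "p = oct_scale (inverse ga) t"
  have "p \<in> Imag" using t(1) U(2) by (auto simp: p_def)
  moreover have "cross p a = a" "cross p b = b" using ga gb gb_ga ga_nz by (simp_all add: p_def)
  moreover have "nform p p = -1"
  proof -
    have "nform p p = inverse ga * inverse ga * nform t t" by (simp add: p_def)
    also have "nform t t = - (ga * ga)" using ga(2) by simp
    finally show ?thesis using ga_nz by (simp add: field_simps)
  qed
  ultimately show False using no_commuting_eigenpair[OF _ ab_im _ ab(3) _ _ ab0] by blast
qed

lemma no_null_commuting_triple:
  assumes imag: "a \<in> Imag" "b \<in> Imag" "c \<in> Imag"
    and ind: "indep2 oct_scale a b" and c: "c \<notin> Oct.span {a, b}"
    and null: "nform a a = 0" "nform a b = 0" "nform a c = 0"
    and comm: "cross a b = 0" "cross a c = 0" "cross b c = 0"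
  shows False
proof -
  obtain w where w: "w \<in> Imag" "nform a w = 1" "nform b w = 0"
    using nform_dual_vector[OF imag(1,2) ind] by blast
  define p where "p = cross a w"
  have p_cross: "cross p x = x - oct_scale (2 * nform x w) a"
    if "x \<in> Imag" "nform a x = 0" "cross a x = 0" for x
  proof -
    have "cross x p = oct_scale (2 * nform x w) a - x"
      using cross_commuting_cross[OF imag(1) that(1) w(1) that(2,3)] w(2) by (simp add: p_def)
    then show ?thesis using cross_antisym[of p x] by simp
  qed
  define c' where "c' = c - oct_scale (nform c w) a"
  have "cross p b = b" using p_cross[OF imag(2) null(2) comm(1)] w(3) by simp
  moreover have "cross p c' = c'"
  proof -
    have "cross p a = - a" using p_cross[OF imag(1) null(1)] w(2) by (simp add: oct_eq_iff algebra_simps)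
    then show ?thesis using p_cross[OF imag(3) null(3) comm(2)] by (simp add: c'_def oct_eq_iff algebra_simps)
  qed
  moreover have "nform p p = -1"
    using nform_cross_cross[OF imag(1) w(1) w(1)] null(1) w(2) by (simp add: p_def)
  moreover have "cross b c' = 0" using comm cross_antisym[of b a] by (simp add: c'_def)
  moreover have "indep2 oct_scale b c'"
    unfolding indep2_def
  proof (intro allI impI)
    fix q r assume h: "oct_scale q b + oct_scale r c' = 0"
    have "oct_scale (- (r * nform c w)) a + oct_scale q b + oct_scale r c = oct_scale q b + oct_scale r c'"
      by (simp add: c'_def oct_eq_iff algebra_simps)
    then have "oct_scale (- (r * nform c w)) a + oct_scale q b + oct_scale r c = 0" using h by simp
    then have "- (r * nform c w) = 0 \<and> q = 0 \<and> r = 0"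
      using Oct.indep3_coeffs_zero[OF ind c] by blast
    then show "q = 0 \<and> r = 0" by simp
  qed
  moreover have "p \<in> Imag" "c' \<in> Imag" using imag by (simp_all add: p_def c'_def)
  ultimately show False using no_commuting_eigenpair[OF _ imag(2)] by blast
qed

lemma cross_degenerate_block_isotropic:
  assumes blk: "is_block U" and deg: "cross_degenerate U" and iso: "\<And>t. t \<in> U \<Longrightarrow> nform t t = 0"
  shows False
proof -
  from blk have U: "Oct.subspace U" "U \<subseteq> Imag" "Oct.dim U = 3" by (auto simp: is_block_def)
  have orth: "nform x y = 0" if "x \<in> U" "y \<in> U" for x y
  proof -
    have "x + y \<in> U" using that U(1) by (simp add: Oct.subspace_add)
    then have "nform (x + y) (x + y) = 0" by (rule iso)
    then have "nform x y + nform x y = 0 + 0"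
      using iso[OF that(1)] iso[OF that(2)] by (simp add: nform_sym)
    then show ?thesis by (rule double_cancel[OF two_nz])
  qed
  have comm: "cross x y = 0" if "x \<in> U" "y \<in> U" for x y
  proof (cases "indep2 oct_scale x y")
    case True
    then have "cross x y \<in> Oct.span {x, y}" using deg that unfolding cross_degenerate_def by blast
    then show ?thesis using dependent_cross_isotropic_zero[OF _ _ True] that iso U(2) by blast
  qed (rule cross_not_indep2)
  obtain a b c where abc: "a \<in> U" "b \<in> U" "c \<in> U" "indep2 oct_scale a b" "c \<notin> Oct.span {a, b}"
    using Oct.dim3_subspace_basis[OF U(1,3)] by blast
  show False
    using no_null_commuting_triple[OF _ _ _ abc(4,5)] abc(1-3) U(2) orth comm by blast
qed

lemma block_generating_pair:
  assumes "is_block U"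
  obtains x y where "x \<in> U" "y \<in> U" "indep2 oct_scale x y" "cross x y \<notin> Oct.span {x, y}"
proof -
  have "\<not> cross_degenerate U"
    using cross_degenerate_block_anisotropic[OF assms] cross_degenerate_block_isotropic[OF assms] by blast
  then show ?thesis using that unfolding cross_degenerate_def by blast
qed

lemma Imag_in_span_units: "x \<in> Imag \<Longrightarrow> x \<in> Oct.span {E1, E2, E3, E4, E5, E6, E7::'a oct}"
proof -
  assume x: "x \<in> Imag"
  have "x = oct_scale (coord1 x) E1 + oct_scale (coord2 x) E2 + oct_scale (coord3 x) E3 + oct_scale (coord4 x) E4
     + oct_scale (coord5 x) E5 + oct_scale (coord6 x) E6 + oct_scale (coord7 x) E7"
    using x by (simp add: oct_eq_iff E_defs Imag_def)
  also have "\<dots> \<in> Oct.span {E1, E2, E3, E4, E5, E6, E7}"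
    by (intro oct_span_intros) auto
  finally show ?thesis .
qed

lemma dim_Imag: "Oct.dim Imag = 7"
proof -
  have Imag_eq: "Imag = Oct.span {E1, E2, E3, E4, E5, E6, E7::'a oct}"
  proof
    show "Imag \<subseteq> Oct.span {E1, E2, E3, E4, E5, E6, E7}" using Imag_in_span_units by blast
    show "Oct.span {E1, E2, E3, E4, E5, E6, E7} \<subseteq> Imag"
      by (rule Oct.span_minimal) (auto simp: subspace_Imag)
  qed
  have ind: "Oct.independent {E1, E2, E3, E4, E5, E6, E7::'a oct}"
    by (rule Oct.independent_mono[OF independent_oct_basis]) (auto simp: oct_basis_def)
  have card: "card {E1, E2, E3, E4, E5, E6, E7::'a oct} = 7" by (simp add: E_defs oct_of_eq_iff)
  show ?thesis unfolding Imag_eq using Oct.dim_span_eq_card_independent[OF ind] card by simp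
qed

lemma common_nform_kernel: "\<exists>y\<in>Imag. y \<noteq> 0 \<and> nform a y = 0 \<and> nform b y = 0 \<and> nform c y = 0"
proof (rule ccontr)
  assume "\<not> ?thesis"
  then have H: "\<And>y. y \<in> Imag \<Longrightarrow> nform a y = 0 \<Longrightarrow> nform b y = 0 \<Longrightarrow> nform c y = 0 \<Longrightarrow> y = 0" by blast
  define f where "f y = oct_scale (nform a y) E1 + oct_scale (nform b y) E2 + oct_scale (nform c y) E3" for y
  have lin: "Vector_Spaces.linear oct_scale oct_scale f"
    unfolding Vector_Spaces.linear_iff by (auto simp: f_def vector_space_oct_scale oct_eq_iff algebra_simps)
  have f0: "nform a y = 0 \<and> nform b y = 0 \<and> nform c y = 0" if "f y = 0" for y
    using that by (simp add: f_def oct_eq_iff E_defs)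
  have span_im: "Oct.span Imag = Imag" using subspace_Imag by simp
  have inj: "inj_on f (Oct.span Imag)"
    unfolding span_im
  proof (rule inj_onI)
    fix x y assume xy: "x \<in> Imag" "y \<in> Imag" "f x = f y"
    have "f (x - y) = f x - f y" by (simp add: f_def oct_scale_simps algebra_simps)
    then have "f (x - y) = 0" using xy(3) by simp
    then have "x - y = 0" using H[of "x - y"] f0[of "x - y"] xy(1,2) by simp
    then show "x = y" by simp
  qed
  have "Oct.dim (f ` Imag) = Oct.dim Imag" using OctPair.dim_image_eq[OF lin inj] .
  moreover have "f ` Imag \<subseteq> Oct.span {E1, E2, E3::'a oct}"
  proof
    fix z assume "z \<in> f ` Imag"
    then obtain y where "z = f y" by blast
    then show "z \<in> Oct.span {E1, E2, E3::'a oct}" unfolding Oct.in_span_triple f_def by blast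
  qed
  then have "Oct.dim (f ` Imag) \<le> card {E1, E2, E3::'a oct}" using Oct.dim_le_card by blast
  moreover have "card {E1, E2, E3::'a oct} = 3" by (simp add: E_defs oct_of_eq_iff)
  ultimately show False using dim_Imag by simp
qed

section \<open>Blocks and subalgebras\<close>

lemma oct_conj_eq_neg_iff: "oct_conj (x::'a oct) = - x \<longleftrightarrow> coord0 x = 0"
proof
  assume "oct_conj x = - x"
  then have "coord0 x = - coord0 x" by (simp add: oct_eq_iff)
  then have "- coord0 x = coord0 x" by (rule sym)
  then show "coord0 x = 0" by (rule neg_eq_self_imp_zero[OF two_nz])
next
  assume "coord0 x = 0" then show "oct_conj x = - x" by (simp add: oct_eq_iff)
qed

lemma im_of_eq_Imag: "im_of (H::'a oct set) = H \<inter> Imag"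
  by (auto simp: im_of_def Imag_def oct_conj_eq_neg_iff)

lemma oct_one_notin_Imag: "oct_one \<notin> Imag" by (simp add: Imag_def)

lemma oct_mult_Imag: "x \<in> Imag \<Longrightarrow> y \<in> Imag \<Longrightarrow> oct_mult \<alpha> \<beta> \<gamma> x y = oct_scale (- nform x y) oct_one + cross x y"
  by (simp add: oct_mult_decomp Imag_def oct_scale_simps)

lemma cross_imag_parts: "cross x y = cross (x - oct_scale (coord0 x) oct_one) (y - oct_scale (coord0 y) oct_one)"
  by (simp add: oct_eq_iff cross_def)

lemma nform_imag_parts: "nform x y = nform (x - oct_scale (coord0 x) oct_one) (y - oct_scale (coord0 y) oct_one)"
  by (simp add: nform_def)

lemma dim_span_insert_one:
  assumes "Oct.subspace U" "U \<subseteq> Imag"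
  shows "Oct.dim (Oct.span (insert oct_one U)) = Oct.dim U + 1"
proof -
  have span_U: "Oct.span U = U" using assms(1) by (simp only: Oct.span_eq_iff)
  have "oct_one \<notin> U" using assms(2) oct_one_notin_Imag by auto
  then have "oct_one \<notin> Oct.span U" unfolding span_U .
  then show ?thesis by (simp only: Oct.dim_span Oct.dim_insert if_False)
qed

lemma span_insert_one_imag_part:
  assumes "Oct.subspace U" "U \<subseteq> Imag" "x \<in> Oct.span (insert oct_one U)"
  shows "x - oct_scale (coord0 x) oct_one \<in> U"
proof -
  have span_U: "Oct.span U = U" using assms(1) by (simp only: Oct.span_eq_iff)
  obtain k where k: "x - oct_scale k oct_one \<in> U"
    using assms(3) unfolding Oct.span_breakdown_eq span_U by blast
  then have "coord0 (x - oct_scale k oct_one) = 0" using assms(2) by (auto simp: Imag_def)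
  then have "k = coord0 x" by simp
  then show ?thesis using k by simp
qed

lemma is_block_im_of_subalgebra:
  assumes sa: "oct_subalgebra \<alpha> \<beta> \<gamma> H" and d4: "Oct.dim H = 4"
  shows "is_block (im_of H)"
proof -
  have H: "Oct.subspace H" "oct_one \<in> H" "\<And>x y. x\<in>H \<Longrightarrow> y\<in>H \<Longrightarrow> oct_mult \<alpha> \<beta> \<gamma> x y \<in> H"
    using sa by (auto simp: oct_subalgebra_def)
  let ?U = "H \<inter> Imag"
  have U: "Oct.subspace ?U" using H(1) subspace_Imag by (rule Oct.subspace_inter)
  have decomp: "x - oct_scale (coord0 x) oct_one \<in> ?U" if "x \<in> H" for x
    using that H(1,2) by (auto simp: Oct.subspace_diff Oct.subspace_scale Imag_def)
  have spanH: "Oct.span (insert oct_one ?U) = H"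
  proof (rule Oct.span_subspace)
    show "insert oct_one ?U \<subseteq> H" using H(2) by auto
    show "H \<subseteq> Oct.span (insert oct_one ?U)"
    proof
      fix x assume "x \<in> H"
      then have "x - oct_scale (coord0 x) oct_one \<in> Oct.span ?U" using decomp Oct.span_base by blast
      then show "x \<in> Oct.span (insert oct_one ?U)" unfolding Oct.span_breakdown_eq by blast
    qed
    show "Oct.subspace H" by (rule H(1))
  qed
  have "Oct.dim H = Oct.dim ?U + 1"
    using dim_span_insert_one[OF U] spanH by simp
  then have d3: "Oct.dim ?U = 3" using d4 by simp
  have cl: "cross x y \<in> ?U" if "x \<in> ?U" "y \<in> ?U" for x y
  proof -
    have "cross x y = oct_mult \<alpha> \<beta> \<gamma> x y + oct_scale (nform x y) oct_one"
      using oct_mult_Imag[of x y] that by (simp add: oct_scale_simps)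
    moreover have "oct_mult \<alpha> \<beta> \<gamma> x y \<in> H" using H(3) that by blast
    ultimately have "cross x y \<in> H" using H(1,2) by (simp add: Oct.subspace_add Oct.subspace_scale)
    then show ?thesis by simp
  qed
  show ?thesis unfolding is_block_def im_of_eq_Imag using U d3 cl by blast
qed

lemma subalgebra_of_block:
  assumes blk: "is_block U"
  defines "H \<equiv> Oct.span (insert oct_one U)"
  shows "oct_subalgebra \<alpha> \<beta> \<gamma> H" "Oct.dim H = 4" "im_of H = U"
proof -
  have U: "Oct.subspace U" "U \<subseteq> Imag" "Oct.dim U = 3" "\<And>x y. x\<in>U \<Longrightarrow> y\<in>U \<Longrightarrow> cross x y \<in> U"
    using blk by (auto simp: is_block_def)
  have imag_part: "x - oct_scale (coord0 x) oct_one \<in> U" if "x \<in> H" for x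
    using span_insert_one_imag_part[OF U(1,2)] that by (simp add: H_def)
  have UH: "U \<subseteq> H" unfolding H_def by (meson Oct.span_mono Oct.span_superset order_trans subset_insertI)
  have oneH: "oct_one \<in> H" by (simp add: H_def Oct.span_base)
  have "oct_mult \<alpha> \<beta> \<gamma> x y \<in> H" if "x \<in> H" "y \<in> H" for x y
  proof -
    have "cross x y \<in> U"
      using U(4)[OF imag_part[OF that(1)] imag_part[OF that(2)]] by (simp only: cross_imag_parts[symmetric])
    then show ?thesis unfolding oct_mult_decomp H_def
      using imag_part[OF that(1)] imag_part[OF that(2)] UH oneH
      by (intro oct_span_intros) (auto simp: H_def)
  qed
  then show "oct_subalgebra \<alpha> \<beta> \<gamma> H"
    unfolding oct_subalgebra_def using oneH by (simp add: H_def)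
  show "Oct.dim H = 4" using dim_span_insert_one[OF U(1,2)] U(3) by (simp add: H_def)
  show "im_of H = U"
  proof
    show "im_of H \<subseteq> U"
    proof
      fix x assume "x \<in> im_of H"
      then have x: "x \<in> H" "coord0 x = 0" by (auto simp: im_of_eq_Imag Imag_def)
      then show "x \<in> U" using imag_part[OF x(1)] by simp
    qed
    show "U \<subseteq> im_of H" using UH U(2) by (auto simp: im_of_eq_Imag)
  qed
qed

lemma blocks_eq_is_block: "{im_of H | H. oct_subalgebra \<alpha> \<beta> \<gamma> H \<and> Oct.dim H = 4} = {U. is_block U}"
proof
  show "{im_of H | H. oct_subalgebra \<alpha> \<beta> \<gamma> H \<and> Oct.dim H = 4} \<subseteq> {U. is_block U}"
    using is_block_im_of_subalgebra by blast
  show "{U. is_block U} \<subseteq> {im_of H | H. oct_subalgebra \<alpha> \<beta> \<gamma> H \<and> Oct.dim H = 4}"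
  proof
    fix U assume "U \<in> {U. is_block U}"
    then have "is_block U" by simp
    from subalgebra_of_block[OF this] show "U \<in> {im_of H | H. oct_subalgebra \<alpha> \<beta> \<gamma> H \<and> Oct.dim H = 4}"
      by blast
  qed
qed

section \<open>Division algebras and anisotropy\<close>

definition anisotropic :: bool where
  "anisotropic \<longleftrightarrow> (\<forall>x\<in>Imag. nform x x = 0 \<longrightarrow> x = 0)"

lemma division_anisotropic:
  assumes "oct_division \<alpha> \<beta> \<gamma>" shows anisotropic
  unfolding anisotropic_def
proof (intro ballI impI)
  fix x assume x: "x \<in> Imag" "nform x x = 0"
  have "oct_mult \<alpha> \<beta> \<gamma> x x = 0" using oct_mult_Imag[OF x(1) x(1)] x(2) by simp
  then show "x = 0" using assms unfolding oct_division_def by blast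
qed

lemma nform_neg_one_isotropic:
  assumes e: "e \<in> Imag" "nform e e = -1"
  obtains z where "z \<in> Imag" "z \<noteq> 0" "nform z z = 0"
proof -
  obtain y where y: "y \<in> Imag" "y \<noteq> 0" "nform e y = 0"
    using common_nform_kernel[of e e e] by blast
  have ey: "nform (cross e y) (cross e y) = - nform y y"
    using nform_cross_cross[OF e(1) y(1) y(1)] e(2) y(3) by simp
  show ?thesis
  proof (cases "nform y y = 0")
    case True
    then show ?thesis using that y by blast
  next
    case False
    define z where "z = y + cross e y"
    have "z \<noteq> 0"
    proof
      assume "z = 0"
      then have "cross e y = - y" unfolding z_def by (simp add: add_eq_0_iff)
      then have "- nform y y = nform y y" using ey by simp
      with False show False using neg_eq_self_imp_zero[OF two_nz] by blast
    qed
    moreover have "nform z z = 0" using ey by (simp add: z_def nform_sym)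
    moreover have "z \<in> Imag" using y by (simp add: z_def)
    ultimately show ?thesis using that by blast
  qed
qed

lemma oct_mult_eq_zero_imag_parts:
  assumes xy: "oct_mult \<alpha> \<beta> \<gamma> x y = 0"
  defines "u \<equiv> x - oct_scale (coord0 x) oct_one" and "v \<equiv> y - oct_scale (coord0 y) oct_one"
  shows "nform u v = coord0 x * coord0 y"
    and "cross u v = - (oct_scale (coord0 x) v + oct_scale (coord0 y) u)"
proof -
  have M: "oct_scale (coord0 x * coord0 y - nform u v) oct_one
      + (oct_scale (coord0 x) v + oct_scale (coord0 y) u + cross u v) = 0"
    using xy unfolding oct_mult_decomp nform_imag_parts[of x y] cross_imag_parts[of x y]
      u_def[symmetric] v_def[symmetric] by (simp add: add.assoc)
  have imag: "u \<in> Imag" "v \<in> Imag" by (simp_all add: u_def v_def Imag_def)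
  have "coord0 (oct_scale (coord0 x * coord0 y - nform u v) oct_one
      + (oct_scale (coord0 x) v + oct_scale (coord0 y) u + cross u v)) = 0"
    using M by simp
  then show uv: "nform u v = coord0 x * coord0 y" using imag by (simp add: Imag_def cross_def)
  then have "oct_scale (coord0 x) v + oct_scale (coord0 y) u + cross u v = 0" using M by simp
  then show "cross u v = - (oct_scale (coord0 x) v + oct_scale (coord0 y) u)"
    by (simp only: add_eq_0_iff)
qed

lemma anisotropic_division:
  assumes an: anisotropic shows "oct_division \<alpha> \<beta> \<gamma>"
  unfolding oct_division_def
proof (intro allI impI)
  have A: "\<And>x. x \<in> Imag \<Longrightarrow> nform x x = 0 \<Longrightarrow> x = 0" using an unfolding anisotropic_def by blast
  fix x y assume xy: "oct_mult \<alpha> \<beta> \<gamma> x y = 0"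
  define l m where "l = coord0 x" and "m = coord0 y"
  define u v where "u = x - oct_scale l oct_one" and "v = y - oct_scale m oct_one"
  have imag: "u \<in> Imag" "v \<in> Imag" by (simp_all add: u_def v_def l_def m_def Imag_def)
  have xu: "x = oct_scale l oct_one + u" and yv: "y = oct_scale m oct_one + v"
    by (simp_all add: u_def v_def)
  have uv: "nform u v = l * m" "cross u v = - (oct_scale l v + oct_scale m u)"
    using oct_mult_eq_zero_imag_parts[OF xy] by (simp_all add: u_def v_def l_def m_def)
  have "cross u (cross u v) = - oct_scale l (cross u v)" by (simp add: uv(2))
  then have "oct_scale (l * m) u + oct_scale (- nform u u) v = oct_scale l (oct_scale l v + oct_scale m u)"
    using cross_cross[OF imag] uv by (simp add: oct_scale_simps)
  then have uu: "oct_scale (l * l + nform u u) v = 0" by (simp add: oct_eq_iff algebra_simps)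
  show "x = 0 \<or> y = 0"
  proof (cases "v = 0")
    case True
    then have "oct_scale m u = 0" "l * m = nform u v" using uv by simp_all
    then show ?thesis using True xu yv by auto
  next
    case False
    with uu have luu: "nform u u = - (l * l)" by (simp add: add_eq_0_iff)
    show ?thesis
    proof (cases "l = 0")
      case True
      then show ?thesis using A[OF imag(1)] luu xu by simp
    next
      case False
      have "oct_scale (inverse l) u \<in> Imag" using imag by simp
      moreover have "nform (oct_scale (inverse l) u) (oct_scale (inverse l) u) = -1"
        using False luu by (simp add: field_simps)
      ultimately obtain z where "z \<in> Imag" "z \<noteq> 0" "nform z z = 0"
        using nform_neg_one_isotropic by blast
      with A show ?thesis by blast
    qed
  qed
qed

lemma isotropic_cross_partner:
  assumes u: "u \<in> Imag" "u \<noteq> 0" "nform u u = 0"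
  obtains q where "q \<in> Imag" "nform u q = 0" "cross u q \<notin> Oct.span {u}"
proof -
  obtain w where w: "w \<in> Imag" "nform u w = 1" using nform_eq_one[OF u(1,2)] by blast
  obtain y where y: "y \<in> Imag" "y \<noteq> 0" "nform u y = 0" "nform w y = 0" "nform (cross u w) y = 0"
    using common_nform_kernel[of u w "cross u w"] by blast
  show ?thesis
  proof (cases "cross u y \<in> Oct.span {u}")
    case False
    then show ?thesis using that y by blast
  next
    case True
    then obtain lam where lam: "cross u y = oct_scale lam u" by (auto simp: Oct.in_span_singleton)
    have "nform (cross u y) w = nform y (cross w u)"
      by (metis nform_cross_cyclic nform_sym)
    also have "\<dots> = - nform (cross u w) y" by (simp add: cross_antisym[of w u] nform_sym)
    finally have "lam = 0" using lam w(2) y(5) by (simp add: nform_sym)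
    then have uy: "cross u y = 0" using lam by simp
    have "cross_defect u y w = cross_defect w u y" using cross_defect_cyclic[OF u(1) y(1) w(1)] .
    then have "cross u (cross y w) = y + y"
      using uy w(2) y(3,4) by (simp add: cross_defect_def nform_sym diff_eq_eq)
    moreover have "y + y \<notin> Oct.span {u}"
    proof
      assume "y + y \<in> Oct.span {u}"
      then obtain mu where mu: "y + y = oct_scale mu u" by (auto simp: Oct.in_span_singleton)
      have "nform (y + y) w = mu * nform u w" using mu by simp
      then have "mu = 0" using y(4) w(2) by (simp add: nform_sym)
      then have "y + y = 0 + 0" using mu by simp
      with y(2) show False using Oct.vector_double_cancel[OF two_nz] by blast
    qed
    moreover have "nform u (cross y w) = 0"
      using nform_cross_cyclic[of u y w, symmetric] uy by simp
    ultimately show ?thesis using that y(1) w(1) by (metis Imag_closed(2))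
  qed
qed

lemma isotropic_two_blocks:
  assumes u: "u \<in> Imag" "u \<noteq> 0" "nform u u = 0"
  obtains U1 U2 v where "indep2 oct_scale u v" "v \<in> Imag" "is_block U1" "is_block U2" "U1 \<noteq> U2"
    "Oct.span {u, v} \<subseteq> U1" "Oct.span {u, v} \<subseteq> U2"
proof -
  obtain q where q: "q \<in> Imag" "nform u q = 0" "cross u q \<notin> Oct.span {u}"
    using isotropic_cross_partner[OF u] by blast
  define v where "v = cross u q"
  have v_im: "v \<in> Imag" by (simp add: v_def)
  have uv: "nform u v = 0" "cross u v = 0"
    using cross_cross[OF u(1) q(1)] u(3) q(2) by (simp_all add: v_def)
  have ind: "indep2 oct_scale u v" using Oct.not_in_span_indep2[OF u(2) q(3)] by (simp add: v_def)
  obtain w1 where w1: "w1 \<in> Imag" "nform u w1 = 1" "nform v w1 = 0"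
    using nform_dual_vector[OF u(1) v_im ind] by blast
  obtain w2 where w2: "w2 \<in> Imag" "nform v w2 = 1" "nform u w2 = 0"
    using nform_dual_vector[OF v_im u(1) Oct.indep2_sym[OF ind]] by blast
  define z1 z2 where "z1 = cross u w1" and "z2 = cross u w2"
  have uz1: "cross u z1 = u" and uz2: "cross u z2 = 0"
    using cross_cross[OF u(1) w1(1)] cross_cross[OF u(1) w2(1)] u(3) w1(2) w2(3)
    by (simp_all add: z1_def z2_def)
  have vz2: "cross v z2 = oct_scale 2 u"
    using cross_commuting_cross[OF u(1) v_im w2(1) uv] w2 by (simp add: z2_def)
  have z1: "z1 \<notin> Oct.span {u, v}"
    using cross_commuting_span(1)[OF uv(2)] uz1 u(2) by metis
  have z2: "z2 \<notin> Oct.span {u, v}"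
  proof
    assume "z2 \<in> Oct.span {u, v}"
    then have "oct_scale 2 u = 0" using cross_commuting_span(2)[OF uv(2)] vz2 by simp
    with u(2) two_nz show False by simp
  qed
  have "z1 \<notin> Oct.span {u, v, z2}"
  proof
    assume "z1 \<in> Oct.span {u, v, z2}"
    then obtain a b c where "z1 = oct_scale a u + oct_scale b v + oct_scale c z2"
      by (auto simp: Oct.in_span_triple)
    then have "cross u z1 = 0" using uv(2) uz2 by simp
    with uz1 u(2) show False by simp
  qed
  then have "Oct.span {u, v, z1} \<noteq> Oct.span {u, v, z2}" by (auto intro: Oct.span_base)
  moreover have "is_block (Oct.span {u, v, z1})" "is_block (Oct.span {u, v, z2})"
    using commuting_isotropic_block[OF u(1) v_im _ ind u(3) uv] w1(1) w2(1) z1 z2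
    by (simp_all add: z1_def z2_def)
  moreover have "Oct.span {u, v} \<subseteq> Oct.span {u, v, z}" for z by (rule Oct.span_mono) auto
  ultimately show ?thesis using that ind v_im by blast
qed

lemma span_pair_subset_Imag: "x \<in> Imag \<Longrightarrow> y \<in> Imag \<Longrightarrow> Oct.span {x, y} \<subseteq> Imag"
  by (rule Oct.span_minimal) (auto simp: subspace_Imag)

lemma block_through_pair_eq:
  assumes ind: "indep2 oct_scale x y" and nin: "cross x y \<notin> Oct.span {x, y}"
    and U: "is_block U" "Oct.span {x, y} \<subseteq> U"
  shows "U = Oct.span {x, y, cross x y}"
  using block_eq_span_cross[OF U(1) _ _ ind nin] U(2) by (auto intro: Oct.span_base)

lemma anisotropic_unique_block:
  assumes an: anisotropic and W: "Oct.subspace W" "W \<subseteq> Imag" "Oct.dim W = 2"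
  obtains U where "{U'. is_block U' \<and> W \<subseteq> U'} = {U}"
proof -
  obtain x y where xy: "x \<in> W" "y \<in> W" "indep2 oct_scale x y" "W = Oct.span {x, y}"
    using Oct.dim2_subspace_basis[OF W(1,3)] by blast
  have imag: "x \<in> Imag" "y \<in> Imag" using xy W(2) by auto
  have "cross x y \<notin> Oct.span {x, y}"
  proof
    assume "cross x y \<in> Oct.span {x, y}"
    then obtain u v where "u \<in> Oct.span {x, y}" "indep2 oct_scale u v" "nform u u = 0"
      using dependent_cross_isotropic_basis[OF imag xy(3)] by blast
    with an xy(4) W(2) Oct.indep2_nonzero(1) show False unfolding anisotropic_def by blast
  qed
  then have "{U. is_block U \<and> W \<subseteq> U} = {Oct.span {x, y, cross x y}}"
    using block_through_pair_eq[OF xy(3)] is_block_span_cross[OF imag xy(3)] xy(4)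
      Oct.span_mono[of "{x, y}" "{x, y, cross x y}"] by blast
  then show ?thesis by (rule that)
qed

lemma blocks_q_covers: "q_covers oct_scale Imag 2 {U. is_block U}"
  unfolding q_covers_def
proof (intro allI impI)
  fix W assume "Oct.subspace W \<and> W \<subseteq> Imag \<and> Oct.dim W = 2"
  then obtain U where "is_block U" "W \<subseteq> U" using subspace2_covered by blast
  then show "\<exists>U\<in>{U. is_block U}. W \<subseteq> U" by blast
qed

lemma blocks_q_covering_design: "q_covering_design oct_scale Imag 7 3 2 {U. is_block U}"
  unfolding q_covering_design_def
  by (intro conjI ballI subspace_Imag dim_Imag blocks_q_covers) (simp_all add: is_block_def)

lemma blocks_q_covering_minimal: "q_covering_minimal oct_scale Imag 2 {U. is_block U}"
  unfolding q_covering_minimal_def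
proof (intro allI impI notI)
  fix B assume B: "B \<subset> {U. is_block U}" and cov: "q_covers oct_scale Imag 2 B"
  obtain U where U: "is_block U" "U \<notin> B" using psubset_imp_ex_mem[OF B] by blast
  obtain x y where xy: "x \<in> U" "y \<in> U" "indep2 oct_scale x y" "cross x y \<notin> Oct.span {x, y}"
    using block_generating_pair[OF U(1)] by blast
  have imag: "x \<in> Imag" "y \<in> Imag" using xy U(1) by (auto simp: is_block_def)
  have "Oct.subspace (Oct.span {x, y}) \<and> Oct.span {x, y} \<subseteq> Imag \<and> Oct.dim (Oct.span {x, y}) = 2"
    using span_pair_subset_Imag[OF imag] Oct.dim_span_pair[OF xy(3)] by simp
  then obtain U' where U': "U' \<in> B" "Oct.span {x, y} \<subseteq> U'"
    using cov unfolding q_covers_def by blast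
  have "Oct.span {x, y} \<subseteq> U"
    by (rule Oct.span_minimal) (use xy(1,2) U(1) in \<open>auto simp: is_block_def\<close>)
  then have "U = Oct.span {x, y, cross x y}" by (rule block_through_pair_eq[OF xy(3,4) U(1)])
  moreover have "U' = Oct.span {x, y, cross x y}"
    using block_through_pair_eq[OF xy(3,4) _ U'(2)] psubsetD[OF B U'(1)] by simp
  ultimately show False using U(2) U'(1) by simp
qed

lemma blocks_q_subspace_design_iff:
  "q_subspace_design oct_scale Imag 2 7 3 1 {U. is_block U} \<longleftrightarrow> anisotropic"
proof
  assume design: "q_subspace_design oct_scale Imag 2 7 3 1 {U. is_block U}"
  have count: "card {U \<in> {U. is_block U}. W \<subseteq> U} = 1"
    if "Oct.subspace W" "W \<subseteq> Imag" "Oct.dim W = 2" for W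
    using design that unfolding q_subspace_design_def by simp
  show anisotropic
    unfolding anisotropic_def
  proof (intro ballI impI, rule ccontr)
    fix u assume u: "u \<in> Imag" "nform u u = 0" "u \<noteq> 0"
    obtain U1 U2 v where two: "indep2 oct_scale u v" "v \<in> Imag" "is_block U1" "is_block U2" "U1 \<noteq> U2"
      "Oct.span {u, v} \<subseteq> U1" "Oct.span {u, v} \<subseteq> U2"
      by (rule isotropic_two_blocks[OF u(1,3,2)])
    have "card {U \<in> {U. is_block U}. Oct.span {u, v} \<subseteq> U} = 1"
      using count[OF Oct.subspace_span span_pair_subset_Imag[OF u(1) two(2)] Oct.dim_span_pair[OF two(1)]] .
    then obtain A where A: "{U \<in> {U. is_block U}. Oct.span {u, v} \<subseteq> U} = {A}"
      by (rule card_1_singletonE)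
    have "U1 \<in> {A}" "U2 \<in> {A}" unfolding A[symmetric] using two by simp_all
    with two(5) show False by simp
  qed
next
  assume an: anisotropic
  have unique: "finite {U \<in> {U. is_block U}. W \<subseteq> U} \<and> card {U \<in> {U. is_block U}. W \<subseteq> U} = 1"
    if W: "Oct.subspace W" "W \<subseteq> Imag" "Oct.dim W = 2" for W
  proof -
    obtain U where "{U'. is_block U' \<and> W \<subseteq> U'} = {U}"
      using anisotropic_unique_block[OF an W] by blast
    moreover have "{U \<in> {U. is_block U}. W \<subseteq> U} = {U'. is_block U' \<and> W \<subseteq> U'}" by simp
    ultimately show ?thesis by simp
  qed
  show "q_subspace_design oct_scale Imag 2 7 3 1 {U. is_block U}"
    unfolding q_subspace_design_def
  proof (intro conjI allI impI)
    show "Oct.subspace Imag" by (rule subspace_Imag)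
    show "Oct.dim Imag = 7" by (rule dim_Imag)
    show "\<forall>U\<in>{U. is_block U}. Oct.subspace U \<and> U \<subseteq> Imag \<and> Oct.dim U = 3"
      by (simp add: is_block_def)
    fix W assume "Oct.subspace W \<and> W \<subseteq> Imag \<and> Oct.dim W = 2"
    then show "finite {U \<in> {U. is_block U}. W \<subseteq> U}" "card {U \<in> {U. is_block U}. W \<subseteq> U} = 1"
      using unique by simp_all
  qed
qed

end

theorem mainTheorem2:
  fixes \<alpha> \<beta> \<gamma> :: "'a::field"
  assumes char: "(2::'a) \<noteq> 0"
    and "\<alpha> \<noteq> 0" and "\<beta> \<noteq> 0" and "\<gamma> \<noteq> 0"
  shows "q_covering_design oct_scale (im_of UNIV) 7 3 2
           {im_of H | H. oct_subalgebra \<alpha> \<beta> \<gamma> H \<and> vector_space.dim oct_scale H = 4}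
       \<and> q_covering_minimal oct_scale (im_of UNIV) 2
           {im_of H | H. oct_subalgebra \<alpha> \<beta> \<gamma> H \<and> vector_space.dim oct_scale H = 4}
       \<and> (q_subspace_design oct_scale (im_of UNIV) 2 7 3 1
           {im_of H | H. oct_subalgebra \<alpha> \<beta> \<gamma> H \<and> vector_space.dim oct_scale H = 4}
          \<longleftrightarrow> oct_division \<alpha> \<beta> \<gamma>)"
proof -
  interpret cayley \<alpha> \<beta> \<gamma> using assms by unfold_locales
  have "im_of UNIV = Imag" by (simp add: im_of_eq_Imag)
  moreover have "anisotropic \<longleftrightarrow> oct_division \<alpha> \<beta> \<gamma>"
    using anisotropic_division division_anisotropic by blast
  ultimately show ?thesis
    unfolding blocks_eq_is_block
    using blocks_q_covering_design blocks_q_covering_minimal blocks_q_subspace_design_iff by simp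
qed

end
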